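(* Let $p\ge 5$ be a prime and $G_7=\langle a,b,c\mid a^{p^2}=1=b^p=c^p,\ ba=a^{1+p}b,\ ca=a^{1+p}bc,\ cb=a^pbc\rangle$, with $K=\langle c\rangle$. Then $\mathrm{Aut}_K(G_7)\cong D_{2p}\times\mathbb{Z}_{p(p-1)}$.
   Context: $\mathrm{Aut}_K(G)=\{\theta\in\mathrm{Aut}(G)\mid\theta(K)=K\}$. $\mathbb{Z}_m$ is the cyclic group of order $m$ and $D_{2p}$ the dihedral group of order $2p$. *)

theory Defs
  imports "HOL-Algebra.Algebra"
begin

definition G7_relations :: "('a, 'm) monoid_scheme \<Rightarrow> nat \<Rightarrow> 'a \<Rightarrow> 'a \<Rightarrow> 'a \<Rightarrow> bool" where
  "G7_relations G p a b c \<longleftrightarrow>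
     a \<in> carrier G \<and> b \<in> carrier G \<and> c \<in> carrier G \<and>
     a [^]\<^bsub>G\<^esub> (p^2) = \<one>\<^bsub>G\<^esub> \<and> b [^]\<^bsub>G\<^esub> p = \<one>\<^bsub>G\<^esub> \<and> c [^]\<^bsub>G\<^esub> p = \<one>\<^bsub>G\<^esub> \<and>
     b \<otimes>\<^bsub>G\<^esub> a = a [^]\<^bsub>G\<^esub> (1 + p) \<otimes>\<^bsub>G\<^esub> b \<and>
     c \<otimes>\<^bsub>G\<^esub> a = a [^]\<^bsub>G\<^esub> (1 + p) \<otimes>\<^bsub>G\<^esub> b \<otimes>\<^bsub>G\<^esub> c \<and>
     c \<otimes>\<^bsub>G\<^esub> b = a [^]\<^bsub>G\<^esub> p \<otimes>\<^bsub>G\<^esub> b \<otimes>\<^bsub>G\<^esub> c"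

text \<open>Target groups are taken on the type nat, which suffices
  since the presented group is finite (hence countable), so this determines G up to
  isomorphism (von Dyck).\<close>
definition is_G7_presentation :: "'a monoid \<Rightarrow> nat \<Rightarrow> 'a \<Rightarrow> 'a \<Rightarrow> 'a \<Rightarrow> bool" where
  "is_G7_presentation G p a b c \<longleftrightarrow>
     group G \<and> G7_relations G p a b c \<and> generate G {a, b, c} = carrier G \<and>
     (\<forall>(H :: nat monoid) x y z. group H \<and> G7_relations H p x y z \<longrightarrow>
        (\<exists>h \<in> hom G H. h a = x \<and> h b = y \<and> h c = z))"

definition AutK :: "'a monoid \<Rightarrow> 'a set \<Rightarrow> ('a \<Rightarrow> 'a) monoid" where
  "AutK G K = (AutoGroup G) \<lparr>carrier := {\<theta> \<in> auto G. \<theta> ` K = K}\<rparr>"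

text \<open>Dihedral group of order 2n: elements (k, s) standing for r^k s^s,
  with r^n = 1, s^2 = 1, s r s = r^(-1).\<close>
definition dihedral_group :: "nat \<Rightarrow> (int \<times> bool) monoid" where
  "dihedral_group n =
     \<lparr>carrier = {0..<int n} \<times> UNIV,
      monoid.mult = (\<lambda>(k1, s1) (k2, s2). ((k1 + (if s1 then - k2 else k2)) mod int n, s1 \<noteq> s2)),
      one = (0, False)\<rparr>"

end

theory Submission
  imports Defs "HOL-Number_Theory.Number_Theory" "HOL-Library.Countable" "HOL-Library.Product_Plus"
begin

(* Let R = Z[\<epsilon>]/(p \<epsilon>) with \<epsilon>^2 = p, a local ring of order p^3 whose unit group is
   <u> \<times> <g> = Z_p \<times> Z_(p(p-1)), where u = 1 + \<epsilon> + p/2 and g is a primitive root modulo p^2.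
   The semidirect product M of (R, +) by <u>, acting by multiplication, has order p^4 and is
   generated by three elements satisfying the relations of G_7, while these relations alone
   allow at most p^4 elements a^i b^j c^k; hence G_7 is isomorphic to M with c corresponding to u.
   An automorphism of M fixing <u> is determined by the images of d = a c, b and c, and the
   relations force it to be x u^k \<mapsto> r \<sigma>^s(x) u^(\<plusminus>k) for a unit r of R, where \<sigma> is the
   conjugation \<epsilon> \<mapsto> -\<epsilon>.  These compose like the units twisted by \<sigma>, which inverts u and
   fixes g, so Aut_K(G_7) = <u, \<sigma>> \<times> <g> = D_2p \<times> Z_(p(p-1)). *)

section \<open>Presentations of G_7\<close>

lemma (in group) pow_mod_exponent:
  assumes x: "x \<in> carrier G" and m: "x [^] m = \<one>"
  shows "x [^] n = x [^] (n mod (m::nat))"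
proof -
  have "x [^] n = x [^] (m * (n div m) + n mod m)" by simp
  also have "\<dots> = (x [^] m) [^] (n div m) \<otimes> x [^] (n mod m)"
    using x by (simp only: nat_pow_mult[symmetric] nat_pow_pow)
  finally show ?thesis using x m by simp
qed

lemma (in group) inv_eq_pow_pred:
  assumes "x \<in> carrier G" "x [^] m = \<one>" "0 < (m::nat)"
  shows "inv x = x [^] (m - 1)"
  using assms by (intro inv_equality) (simp_all flip: nat_pow_Suc)

lemma hom_eq_on_generate:
  assumes "group G" "group H" "f \<in> hom G H" "g \<in> hom G H" "S \<subseteq> carrier G"
    and "\<And>s. s \<in> S \<Longrightarrow> f s = g s" and "x \<in> generate G S"
  shows "f x = g x"
  using assms(7)
proof (induction rule: generate.induct)
  case one
  then show ?case using assms(1-4) by (simp add: group_hom.hom_one group_hom_axioms_def group_hom_def)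
next
  case (incl h)
  then show ?case using assms(6) by simp
next
  case (inv h)
  interpret f: group_hom G H f using assms(1-3) by (simp add: group_hom_def group_hom_axioms_def)
  interpret g: group_hom G H g using assms(1,2,4) by (simp add: group_hom_def group_hom_axioms_def)
  show ?case using inv assms(5,6) by (auto simp: f.hom_inv g.hom_inv)
next
  case (eng h1 h2)
  interpret G: group G by (rule assms(1))
  have "h1 \<in> carrier G" "h2 \<in> carrier G"
    using eng.hyps assms(5) G.generate_incl by blast+
  then show ?case using eng.IH assms(3,4) by (simp add: hom_mult)
qed

lemma G7_relations_hom_image:
  assumes "h \<in> hom G H" "group G" "group H" "G7_relations G p a b c"
  shows "G7_relations H p (h a) (h b) (h c)"
proof -
  interpret h: group_hom G H h using assms by (simp add: group_hom_def group_hom_axioms_def)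
  have abc: "a \<in> carrier G" "b \<in> carrier G" "c \<in> carrier G"
    using assms(4) by (auto simp: G7_relations_def)
  have "h (b \<otimes>\<^bsub>G\<^esub> a) = h (a [^]\<^bsub>G\<^esub> (1 + p) \<otimes>\<^bsub>G\<^esub> b)"
    "h (c \<otimes>\<^bsub>G\<^esub> a) = h (a [^]\<^bsub>G\<^esub> (1 + p) \<otimes>\<^bsub>G\<^esub> b \<otimes>\<^bsub>G\<^esub> c)"
    "h (c \<otimes>\<^bsub>G\<^esub> b) = h (a [^]\<^bsub>G\<^esub> p \<otimes>\<^bsub>G\<^esub> b \<otimes>\<^bsub>G\<^esub> c)"
    "h (a [^]\<^bsub>G\<^esub> (p^2)) = h \<one>\<^bsub>G\<^esub>" "h (b [^]\<^bsub>G\<^esub> p) = h \<one>\<^bsub>G\<^esub>" "h (c [^]\<^bsub>G\<^esub> p) = h \<one>\<^bsub>G\<^esub>"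
    using assms(4) by (simp_all add: G7_relations_def)
  then show ?thesis
    using abc by (simp add: G7_relations_def h.hom_nat_pow)
qed

definition ab_words :: "('a, 'm) monoid_scheme \<Rightarrow> 'a \<Rightarrow> 'a \<Rightarrow> 'a set" where
  "ab_words G a b = {a [^]\<^bsub>G\<^esub> (i::nat) \<otimes>\<^bsub>G\<^esub> b [^]\<^bsub>G\<^esub> (j::nat) | i j. True}"

definition abc_words :: "('a, 'm) monoid_scheme \<Rightarrow> 'a \<Rightarrow> 'a \<Rightarrow> 'a \<Rightarrow> 'a set" where
  "abc_words G a b c = {x \<otimes>\<^bsub>G\<^esub> c [^]\<^bsub>G\<^esub> (k::nat) | x k. x \<in> ab_words G a b}"

context group
begin

context
  fixes p :: nat and a b c :: 'a
  assumes rel: "G7_relations G p a b c"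
begin

lemma G7_in_carrier: "a \<in> carrier G" "b \<in> carrier G" "c \<in> carrier G"
  using rel by (auto simp: G7_relations_def)

lemma G7_rels:
  "a [^] (p^2) = \<one>" "b [^] p = \<one>" "c [^] p = \<one>"
  "b \<otimes> a = a [^] (1 + p) \<otimes> b"
  "c \<otimes> a = a [^] (1 + p) \<otimes> b \<otimes> c"
  "c \<otimes> b = a [^] p \<otimes> b \<otimes> c"
  using rel by (simp_all add: G7_relations_def)

lemma G7_b_a_pow: "b \<otimes> a [^] i = a [^] (i * (1 + p)) \<otimes> b"
proof (induction i)
  case (Suc i)
  have "b \<otimes> a [^] Suc i = (b \<otimes> a [^] i) \<otimes> a"
    using G7_in_carrier by (simp add: m_assoc)
  also have "\<dots> = a [^] (i * (1 + p)) \<otimes> (b \<otimes> a)"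
    using G7_in_carrier by (simp add: Suc m_assoc)
  also have "\<dots> = a [^] (i * (1 + p)) \<otimes> a [^] (1 + p) \<otimes> b"
    using G7_in_carrier by (simp only: G7_rels(4) m_assoc nat_pow_closed)
  also have "\<dots> = a [^] (Suc i * (1 + p)) \<otimes> b"
    using G7_in_carrier by (simp only: nat_pow_mult mult_Suc add.commute)
  finally show ?case .
qed (use G7_in_carrier in simp)

lemma G7_b_pow_a_pow: "b [^] j \<otimes> a [^] i = a [^] (i * (1 + p) ^ j) \<otimes> b [^] j"
proof (induction j arbitrary: i)
  case (Suc j)
  have "b [^] Suc j \<otimes> a [^] i = b [^] j \<otimes> (b \<otimes> a [^] i)"
    using G7_in_carrier by (simp add: m_assoc)
  also have "\<dots> = (b [^] j \<otimes> a [^] (i * (1 + p))) \<otimes> b"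
    using G7_in_carrier by (simp add: G7_b_a_pow m_assoc)
  also have "\<dots> = a [^] (i * (1 + p) ^ Suc j) \<otimes> b [^] Suc j"
    using G7_in_carrier by (simp add: Suc m_assoc algebra_simps)
  finally show ?case .
qed (use G7_in_carrier in simp)

lemma ab_words_carrier: "x \<in> ab_words G a b \<Longrightarrow> x \<in> carrier G"
  using G7_in_carrier by (auto simp: ab_words_def)

lemma ab_words_mult: "x \<in> ab_words G a b \<Longrightarrow> y \<in> ab_words G a b \<Longrightarrow> x \<otimes> y \<in> ab_words G a b"
proof (clarsimp simp: ab_words_def)
  fix i j k l :: nat
  have "a [^] i \<otimes> b [^] j \<otimes> (a [^] k \<otimes> b [^] l) = a [^] i \<otimes> (b [^] j \<otimes> a [^] k) \<otimes> b [^] l"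
    using G7_in_carrier by (simp add: m_assoc)
  also have "\<dots> = (a [^] i \<otimes> a [^] (k * (1 + p) ^ j)) \<otimes> (b [^] j \<otimes> b [^] l)"
    using G7_in_carrier by (simp add: G7_b_pow_a_pow m_assoc)
  also have "\<dots> = a [^] (i + k * (1 + p) ^ j) \<otimes> b [^] (j + l)"
    using G7_in_carrier by (simp only: nat_pow_mult)
  finally show "\<exists>(i'::nat) (j'::nat). a [^] i \<otimes> b [^] j \<otimes> (a [^] k \<otimes> b [^] l) = a [^] i' \<otimes> b [^] j'"
    by blast
qed

lemma one_in_ab_words: "\<one> \<in> ab_words G a b"
proof -
  have "\<one> = a [^] (0::nat) \<otimes> b [^] (0::nat)" using G7_in_carrier by simp
  then show ?thesis unfolding ab_words_def by blast
qed

lemma ab_words_pow: "x \<in> ab_words G a b \<Longrightarrow> x [^] (n::nat) \<in> ab_words G a b"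
  by (induction n) (simp_all add: one_in_ab_words ab_words_mult)

lemma G7_a_b_in_ab_words: "a \<in> ab_words G a b" "b \<in> ab_words G a b"
proof -
  have "a = a [^] (1::nat) \<otimes> b [^] (0::nat)" "b = a [^] (0::nat) \<otimes> b [^] (1::nat)"
    using G7_in_carrier by simp_all
  then show "a \<in> ab_words G a b" "b \<in> ab_words G a b" unfolding ab_words_def by blast+
qed

lemma G7_c_ab_word: "x \<in> ab_words G a b \<Longrightarrow> \<exists>y \<in> ab_words G a b. c \<otimes> x = y \<otimes> c"
proof -
  define C where "C = {x \<in> carrier G. \<exists>y \<in> ab_words G a b. c \<otimes> x = y \<otimes> c}"
  have mult: "x \<otimes> x' \<in> C" if x: "x \<in> C" and x': "x' \<in> C" for x x'
  proof -
    obtain y where y: "y \<in> ab_words G a b" "c \<otimes> x = y \<otimes> c"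
      using x unfolding C_def by blast
    obtain y' where y': "y' \<in> ab_words G a b" "c \<otimes> x' = y' \<otimes> c"
      using x' unfolding C_def by blast
    have xx': "x \<in> carrier G" "x' \<in> carrier G" using x x' unfolding C_def by auto
    have "c \<otimes> (x \<otimes> x') = y \<otimes> (c \<otimes> x')"
      using xx' G7_in_carrier ab_words_carrier[OF y(1)] by (simp flip: m_assoc add: y(2))
    also have "\<dots> = (y \<otimes> y') \<otimes> c"
      using G7_in_carrier ab_words_carrier y y' by (simp add: m_assoc)
    finally show ?thesis using xx' y y' unfolding C_def by (auto intro: ab_words_mult)
  qed
  have pow: "x [^] (n::nat) \<in> C" if "x \<in> C" for x n
  proof (induction n)
    case 0
    show ?case using G7_in_carrier one_in_ab_words unfolding C_def by force
  next
    case (Suc n)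
    then show ?case using mult that by simp
  qed
  have "a [^] (1 + p) \<otimes> b \<in> ab_words G a b" "a [^] p \<otimes> b \<in> ab_words G a b"
    using G7_a_b_in_ab_words by (simp_all add: ab_words_mult ab_words_pow)
  then have "a \<in> C" "b \<in> C"
    using G7_in_carrier G7_rels(5,6) unfolding C_def by auto
  then have "a [^] i \<otimes> b [^] j \<in> C" for i j :: nat
    using pow mult by blast
  then show "x \<in> ab_words G a b \<Longrightarrow> \<exists>y \<in> ab_words G a b. c \<otimes> x = y \<otimes> c"
    unfolding ab_words_def C_def by blast
qed

lemma G7_c_pow_ab_word:
  "x \<in> ab_words G a b \<Longrightarrow> \<exists>y \<in> ab_words G a b. c [^] (k::nat) \<otimes> x = y \<otimes> c [^] k"
proof (induction k arbitrary: x)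
  case 0
  then show ?case using ab_words_carrier by auto
next
  case (Suc k)
  obtain y where y: "y \<in> ab_words G a b" "c \<otimes> x = y \<otimes> c"
    using G7_c_ab_word[OF Suc.prems] by blast
  obtain z where z: "z \<in> ab_words G a b" "c [^] k \<otimes> y = z \<otimes> c [^] k"
    using Suc.IH[OF y(1)] by blast
  have "c [^] Suc k \<otimes> x = c [^] k \<otimes> y \<otimes> c"
    using G7_in_carrier ab_words_carrier Suc.prems y by (simp add: nat_pow_Suc2 m_assoc)
  also have "\<dots> = z \<otimes> c [^] Suc k"
    using G7_in_carrier ab_words_carrier z by (simp add: m_assoc)
  finally show ?case using z(1) by blast
qed

lemma one_in_abc_words: "\<one> \<in> abc_words G a b c"
proof -
  have "\<one> = \<one> \<otimes> c [^] (0::nat)" using G7_in_carrier by simp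
  then show ?thesis using one_in_ab_words unfolding abc_words_def by blast
qed

lemma abc_words_mult:
  assumes "w \<in> abc_words G a b c" "w' \<in> abc_words G a b c"
  shows "w \<otimes> w' \<in> abc_words G a b c"
proof -
  obtain x x' and k k' :: nat where w: "w = x \<otimes> c [^] k" "x \<in> ab_words G a b"
    and w': "w' = x' \<otimes> c [^] k'" "x' \<in> ab_words G a b"
    using assms unfolding abc_words_def by blast
  obtain y where y: "y \<in> ab_words G a b" "c [^] k \<otimes> x' = y \<otimes> c [^] k"
    using G7_c_pow_ab_word[OF w'(2)] by blast
  have "w \<otimes> w' = x \<otimes> (c [^] k \<otimes> x') \<otimes> c [^] k'"
    using w w' G7_in_carrier ab_words_carrier by (simp add: m_assoc)
  also have "\<dots> = (x \<otimes> y) \<otimes> c [^] (k + k')"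
    using w y G7_in_carrier ab_words_carrier by (simp add: y(2) m_assoc nat_pow_mult)
  finally show ?thesis using w(2) y(1) ab_words_mult unfolding abc_words_def by blast
qed

lemma abc_words_pow: "w \<in> abc_words G a b c \<Longrightarrow> w [^] (n::nat) \<in> abc_words G a b c"
  by (induction n) (simp_all add: one_in_abc_words abc_words_mult)

lemma G7_generators_in_abc_words:
  "a \<in> abc_words G a b c" "b \<in> abc_words G a b c" "c \<in> abc_words G a b c"
proof -
  have "a = a \<otimes> c [^] (0::nat)" "b = b \<otimes> c [^] (0::nat)" "c = \<one> \<otimes> c [^] (1::nat)"
    using G7_in_carrier by simp_all
  then show "a \<in> abc_words G a b c" "b \<in> abc_words G a b c" "c \<in> abc_words G a b c"
    using G7_a_b_in_ab_words one_in_ab_words unfolding abc_words_def by blast+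
qed

lemma G7_generate_subset_abc_words:
  assumes p: "0 < p"
  shows "generate G {a, b, c} \<subseteq> abc_words G a b c"
proof
  fix g assume "g \<in> generate G {a, b, c}"
  then show "g \<in> abc_words G a b c"
  proof (induction rule: generate.induct)
    case one
    then show ?case by (rule one_in_abc_words)
  next
    case (incl h)
    then show ?case using G7_generators_in_abc_words by blast
  next
    case (inv h)
    obtain m :: nat where "h [^] m = \<one>" "0 < m"
      using inv G7_rels(1-3) p by auto
    then have "inv h = h [^] (m - 1)"
      using inv G7_in_carrier by (intro inv_eq_pow_pred) auto
    then show ?case using inv G7_generators_in_abc_words abc_words_pow by auto
  next
    case (eng h1 h2)
    then show ?case by (intro abc_words_mult[OF eng.IH])
  qed
qed

lemma G7_card_le:
  assumes gen: "generate G {a, b, c} = carrier G" and p: "0 < p"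
  shows "finite (carrier G)" "card (carrier G) \<le> p^4"
proof -
  let ?D = "{..<p^2} \<times> {..<p} \<times> {..<p}"
  let ?f = "\<lambda>(i, j, k). a [^] i \<otimes> b [^] j \<otimes> c [^] k"
  have sub: "carrier G \<subseteq> ?f ` ?D"
  proof
    fix g assume "g \<in> carrier G"
    then obtain i j k :: nat where "g = a [^] i \<otimes> b [^] j \<otimes> c [^] k"
      using G7_generate_subset_abc_words[OF p] gen by (auto simp: abc_words_def ab_words_def)
    also have "\<dots> = ?f (i mod p^2, j mod p, k mod p)"
      using pow_mod_exponent[OF G7_in_carrier(1) G7_rels(1)] pow_mod_exponent[OF G7_in_carrier(2) G7_rels(2)]
        pow_mod_exponent[OF G7_in_carrier(3) G7_rels(3)]
      by simp
    finally have "g = ?f (i mod p^2, j mod p, k mod p)" .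
    moreover have "(i mod p^2, j mod p, k mod p) \<in> ?D" using p by simp
    ultimately show "g \<in> ?f ` ?D" by (rule image_eqI)
  qed
  then show "finite (carrier G)" by (rule finite_subset) simp
  have "card (carrier G) \<le> card (?f ` ?D)" using sub by (intro card_mono) simp_all
  also have "\<dots> \<le> card ?D" by (rule card_image_le) simp
  also have "\<dots> = p^4" by (simp add: card_cartesian_product power_numeral_reduce)
  finally show "card (carrier G) \<le> p^4" .
qed

end

end

(* The universal property in is_G7_presentation only quantifies over groups on nat;
   a group on a countable type is moved there along to_nat. *)
definition to_nat_group :: "('b::countable) monoid \<Rightarrow> nat monoid" where
  "to_nat_group H = \<lparr>carrier = to_nat ` carrier H,
     monoid.mult = (\<lambda>x y. to_nat (from_nat x \<otimes>\<^bsub>H\<^esub> from_nat y)), one = to_nat \<one>\<^bsub>H\<^esub>\<rparr>"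

lemma to_nat_iso: "group H \<Longrightarrow> to_nat \<in> iso H (to_nat_group H)"
  by (intro isoI homI) (auto simp: to_nat_group_def bij_betw_def inj_on_def)

lemma group_to_nat_group: "group H \<Longrightarrow> group (to_nat_group H)"
proof -
  assume H: "group H"
  interpret group H by (rule H)
  have "monoid (to_nat_group H)"
    by (rule monoidI) (auto simp: to_nat_group_def m_assoc)
  with H show ?thesis by (metis to_nat_iso group.iso_imp_group is_isoI)
qed

lemma G7_presentation_iso:
  fixes H :: "('b::countable) monoid"
  assumes pres: "is_G7_presentation G p a b c" and p: "0 < p"
    and H: "group H" "G7_relations H p x y z" "generate H {x, y, z} = carrier H"
    and card_H: "card (carrier H) = p^4"
  shows "\<exists>\<phi> \<in> iso G H. \<phi> a = x \<and> \<phi> b = y \<and> \<phi> c = z"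
proof -
  let ?N = "to_nat_group H"
  have G: "group G" and rel: "G7_relations G p a b c" and gen: "generate G {a, b, c} = carrier G"
    using pres by (simp_all add: is_G7_presentation_def)
  interpret G: group G by (rule G)
  have N: "group ?N" and enc: "to_nat \<in> iso H ?N"
    using H(1) by (simp_all add: group_to_nat_group to_nat_iso)
  have xyz: "x \<in> carrier H" "y \<in> carrier H" "z \<in> carrier H"
    using H(2) by (simp_all add: G7_relations_def)
  obtain h where h: "h \<in> hom G ?N" "h a = to_nat x" "h b = to_nat y" "h c = to_nat z"
    using pres N G7_relations_hom_image[OF iso_imp_homomorphism[OF enc] H(1) N H(2)]
    unfolding is_G7_presentation_def by blast
  interpret h: group_hom G ?N h using G N h(1) by (simp add: group_hom_def group_hom_axioms_def)
  interpret enc: group_hom H ?N to_nat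
    using H(1) N enc by (simp add: group_hom_def group_hom_axioms_def iso_def)
  have "h ` carrier G = h ` generate G {a, b, c}" by (simp add: gen)
  also have "\<dots> = generate ?N (h ` {a, b, c})"
    using G.G7_in_carrier[OF rel] by (intro h.generate_img[symmetric]) auto
  also have "h ` {a, b, c} = to_nat ` {x, y, z}"
    using h(2-4) by simp
  also have "generate ?N (to_nat ` {x, y, z}) = to_nat ` generate H {x, y, z}"
    using xyz by (intro enc.generate_img) auto
  also have "\<dots> = carrier ?N"
    using H(3) enc by (simp add: iso_def bij_betw_def)
  finally have surj: "h ` carrier G = carrier ?N" .
  have "card (carrier ?N) = p^4"
    using enc card_H by (simp add: iso_def bij_betw_same_card)
  then have "inj_on h (carrier G)"
    using surj G.G7_card_le[OF rel gen p] by (metis eq_card_imp_inj_on card_image_le antisym)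
  then have "h \<in> iso G ?N" using h(1) surj by (simp add: iso_def bij_betw_def)
  moreover have "inv_into (carrier H) to_nat \<in> iso ?N H"
    using enc by (rule group.iso_set_sym[OF H(1)])
  ultimately have "inv_into (carrier H) to_nat \<circ> h \<in> iso G H" by (rule iso_set_trans)
  then show ?thesis
    using h(2-4) xyz by (intro bexI[of _ "inv_into (carrier H) to_nat \<circ> h"]) (simp_all add: inv_into_f_f)
qed

section \<open>Aut_K along isomorphisms\<close>

definition AutK_conj :: "('a \<Rightarrow> 'b) \<Rightarrow> ('b \<Rightarrow> 'a) \<Rightarrow> 'b monoid \<Rightarrow> ('a \<Rightarrow> 'a) \<Rightarrow> 'b \<Rightarrow> 'b" where
  "AutK_conj \<phi> \<psi> H \<theta> = (\<lambda>y \<in> carrier H. \<phi> (\<theta> (\<psi> y)))"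

lemma AutK_carrier: "carrier (AutK G K) = {\<theta> \<in> auto G. \<theta> ` K = K}"
  by (simp add: AutK_def)

lemma AutK_mult:
  "\<theta> \<in> auto G \<Longrightarrow> \<theta>' \<in> auto G \<Longrightarrow> \<theta> \<otimes>\<^bsub>AutK G K\<^esub> \<theta>' = compose (carrier G) \<theta> \<theta>'"
  by (simp add: AutK_def AutoGroup_def BijGroup_def auto_def)

lemma AutK_closed: "\<theta> \<in> carrier (AutK G K) \<Longrightarrow> x \<in> carrier G \<Longrightarrow> \<theta> x \<in> carrier G"
  by (auto simp: AutK_def auto_def hom_def)

lemma AutK_extensional: "\<theta> \<in> carrier (AutK G K) \<Longrightarrow> \<theta> \<in> extensional (carrier G)"
  by (auto simp: AutK_def auto_def Bij_def)

context
  fixes G H :: "_ monoid" and \<phi> \<psi>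
  assumes G: "group G" and H: "group H" and \<phi>: "\<phi> \<in> iso G H" and \<psi>: "\<psi> \<in> iso H G"
    and \<psi>\<phi>: "\<And>x. x \<in> carrier G \<Longrightarrow> \<psi> (\<phi> x) = x"
begin

lemma AutK_conj_in_AutK:
  assumes K: "K \<subseteq> carrier G" and \<theta>: "\<theta> \<in> carrier (AutK G K)"
  shows "AutK_conj \<phi> \<psi> H \<theta> \<in> carrier (AutK H (\<phi> ` K))"
proof -
  have \<theta>': "\<theta> \<in> hom G G" "bij_betw \<theta> (carrier G) (carrier G)" "\<theta> ` K = K"
    using \<theta> by (auto simp: AutK_def auto_def Bij_def)
  have restr: "AutK_conj \<phi> \<psi> H \<theta> = restrict (\<phi> \<circ> \<theta> \<circ> \<psi>) (carrier H)"
    by (simp add: AutK_conj_def restrict_def fun_eq_iff)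
  have "\<phi> \<circ> \<theta> \<circ> \<psi> \<in> hom H H"
    using \<phi> \<psi> \<theta>'(1) by (auto intro: hom_compose simp: iso_def)
  then have "AutK_conj \<phi> \<psi> H \<theta> \<in> hom H H"
    unfolding restr using group.is_monoid[OF H] by (auto simp: hom_def Pi_def monoid.m_closed)
  moreover have "bij_betw (\<phi> \<circ> \<theta> \<circ> \<psi>) (carrier H) (carrier H)"
    using \<phi> \<psi> \<theta>'(2) by (auto intro: bij_betw_trans simp: iso_def)
  then have "bij_betw (AutK_conj \<phi> \<psi> H \<theta>) (carrier H) (carrier H)"
    unfolding restr by (rule bij_betw_restrict_eq[THEN iffD2])
  moreover have "AutK_conj \<phi> \<psi> H \<theta> ` \<phi> ` K = \<phi> ` \<theta> ` K"
    unfolding image_image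
  proof (rule image_cong)
    fix k assume "k \<in> K"
    then have "k \<in> carrier G" "\<phi> k \<in> carrier H"
      using K \<phi> by (auto simp: iso_def hom_def)
    then show "AutK_conj \<phi> \<psi> H \<theta> (\<phi> k) = \<phi> (\<theta> k)"
      by (simp add: AutK_conj_def \<psi>\<phi>)
  qed simp
  ultimately show ?thesis
    using \<theta>'(3) by (simp add: AutK_def auto_def Bij_def AutK_conj_def)
qed

lemma AutK_conj_cancel:
  assumes \<theta>: "\<theta> \<in> carrier (AutK G K)"
  shows "AutK_conj \<psi> \<phi> G (AutK_conj \<phi> \<psi> H \<theta>) = \<theta>"
proof (rule extensionalityI[OF _ AutK_extensional[OF \<theta>]])
  show "AutK_conj \<psi> \<phi> G (AutK_conj \<phi> \<psi> H \<theta>) \<in> extensional (carrier G)"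
    by (simp add: AutK_conj_def)
  fix x assume "x \<in> carrier G"
  then show "AutK_conj \<psi> \<phi> G (AutK_conj \<phi> \<psi> H \<theta>) x = \<theta> x"
    using \<phi> \<psi>\<phi> AutK_closed[OF \<theta>] by (simp add: AutK_conj_def iso_def hom_def Pi_iff)
qed

lemma AutK_conj_mult:
  assumes \<theta>: "\<theta> \<in> carrier (AutK G K)" and \<theta>': "\<theta>' \<in> carrier (AutK G K)"
  shows "AutK_conj \<phi> \<psi> H (compose (carrier G) \<theta> \<theta>') =
    compose (carrier H) (AutK_conj \<phi> \<psi> H \<theta>) (AutK_conj \<phi> \<psi> H \<theta>')"
proof (rule extensionalityI[of _ "carrier H"])
  fix y assume y: "y \<in> carrier H"
  then have "\<psi> y \<in> carrier G" using \<psi> by (auto simp: iso_def hom_def)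
  then have "\<theta>' (\<psi> y) \<in> carrier G" by (rule AutK_closed[OF \<theta>'])
  then show "AutK_conj \<phi> \<psi> H (compose (carrier G) \<theta> \<theta>') y =
      compose (carrier H) (AutK_conj \<phi> \<psi> H \<theta>) (AutK_conj \<phi> \<psi> H \<theta>') y"
    using y \<phi> \<psi>\<phi> \<open>\<psi> y \<in> carrier G\<close> by (auto simp: AutK_conj_def compose_def iso_def hom_def)
qed (simp_all add: AutK_conj_def compose_def)

end

lemma AutK_iso_transport:
  assumes G: "group G" and H: "group H" and \<phi>: "\<phi> \<in> iso G H" and K: "K \<subseteq> carrier G"
  shows "AutK G K \<cong> AutK H (\<phi> ` K)"
proof -
  define \<psi> where "\<psi> = inv_into (carrier G) \<phi>"
  have \<psi>: "\<psi> \<in> iso H G" unfolding \<psi>_def by (rule group.iso_set_sym[OF G \<phi>])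
  have bij: "bij_betw \<phi> (carrier G) (carrier H)" using \<phi> by (simp add: iso_def)
  have \<psi>\<phi>: "\<psi> (\<phi> x) = x" if "x \<in> carrier G" for x
    using that bij by (simp add: \<psi>_def bij_betw_def inv_into_f_f)
  have \<phi>\<psi>: "\<phi> (\<psi> y) = y" if "y \<in> carrier H" for y
    using that bij by (simp add: \<psi>_def bij_betw_def f_inv_into_f)
  have K': "\<phi> ` K \<subseteq> carrier H" "\<psi> ` \<phi> ` K = K"
    using K bij \<psi>\<phi> by (auto simp: bij_betw_def image_image subset_iff cong: image_cong)
  let ?F = "AutK_conj \<phi> \<psi> H" and ?F' = "AutK_conj \<psi> \<phi> G"
  have F: "?F \<theta> \<in> carrier (AutK H (\<phi> ` K))" if "\<theta> \<in> carrier (AutK G K)" for \<theta>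
    using AutK_conj_in_AutK[OF G H \<phi> \<psi> \<psi>\<phi> K that] .
  have F': "?F' \<eta> \<in> carrier (AutK G K)" if "\<eta> \<in> carrier (AutK H (\<phi> ` K))" for \<eta>
    using AutK_conj_in_AutK[OF H G \<psi> \<phi> \<phi>\<psi> K'(1) that] K'(2) by simp
  have "?F \<in> hom (AutK G K) (AutK H (\<phi> ` K))"
    using F AutK_conj_mult[OF G H \<phi> \<psi> \<psi>\<phi>] by (intro homI) (auto simp: AutK_mult AutK_carrier)
  moreover have "bij_betw ?F (carrier (AutK G K)) (carrier (AutK H (\<phi> ` K)))"
    using F F' AutK_conj_cancel[OF G H \<phi> \<psi> \<psi>\<phi>] AutK_conj_cancel[OF H G \<psi> \<phi> \<phi>\<psi>]
    by (intro bij_betw_byWitness[where f' = ?F']) auto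
  ultimately show ?thesis by (auto intro: is_isoI isoI)
qed

section \<open>The ring R = Z[\<epsilon>]/(p \<epsilon>), where \<epsilon>^2 = p\<close>

lemma cong_of_eq_mult: "a = b + m * q \<Longrightarrow> [a = b] (mod m)" for a b m q :: int
  unfolding cong_iff_lin by (intro exI[of _ "- q"]) simp

locale G7_model =
  fixes p :: nat
  assumes prime_p: "Factorial_Ring.prime p" and p_ge_5: "5 \<le> p"
begin

abbreviation P :: int where "P \<equiv> int p"

(* The pair (\<alpha>, \<beta>) stands for \<alpha> + \<beta> \<epsilon>.  Since p \<epsilon> = 0 forces p^2 = \<epsilon> (p \<epsilon>) = 0, two pairs
   denote the same element of R iff they agree modulo (p^2, p): this is the relation \<doteq>. *)
definition rmult :: "int \<times> int \<Rightarrow> int \<times> int \<Rightarrow> int \<times> int" where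
  "rmult x y = (fst x * fst y + P * (snd x * snd y), fst x * snd y + snd x * fst y)"

definition rnorm :: "int \<times> int \<Rightarrow> int \<times> int" where
  "rnorm x = (fst x mod P^2, snd x mod P)"

definition rcong :: "int \<times> int \<Rightarrow> int \<times> int \<Rightarrow> bool" (infix "\<doteq>" 50) where
  "x \<doteq> y \<longleftrightarrow> rnorm x = rnorm y"

primrec rpow :: "int \<times> int \<Rightarrow> nat \<Rightarrow> int \<times> int" where
  "rpow x 0 = (1, 0)"
| "rpow x (Suc n) = rmult (rpow x n) x"

definition rconj :: "bool \<Rightarrow> int \<times> int \<Rightarrow> int \<times> int" where
  "rconj s x = (if s then (fst x, - snd x) else x)"

definition half :: int where "half = (P + 1) div 2"

(* half is the inverse of 2 modulo p, so u = 1 + \<epsilon> + \<epsilon>^2/2 is a truncated exponential: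
   u^k = 1 + k \<epsilon> + p k^2/2, hence u has order p and \<sigma> u = u^(-1). *)
definition u :: "int \<times> int" where "u = (1 + P * half, 1)"

lemma P_ge_5: "P \<ge> 5" using p_ge_5 by simp

lemma p_pos: "0 < p" using p_ge_5 by simp

lemma prime_P: "Factorial_Ring.prime P" using prime_p by simp

lemma odd_p: "odd p"
  using prime_p p_ge_5 prime_odd_nat by force

lemma two_half: "2 * half = P + 1"
  using odd_p unfolding half_def by (metis even_add even_of_nat odd_one dvd_mult_div_cancel)

lemma P_lt_P_square: "1 < P" "P < P^2"
  using P_ge_5 by (simp_all add: power2_eq_square)

lemma P_dvd_small: "P dvd x \<Longrightarrow> 0 \<le> x \<Longrightarrow> x < P \<Longrightarrow> x = 0"
  by (metis order_le_less zdvd_not_zless)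

lemma P_dvd_choose: "0 < k \<Longrightarrow> k < p \<Longrightarrow> P dvd int (p choose k)"
  using dvd_choose_prime[of k p] prime_p by (simp add: int_dvd_int_iff)

lemma rcong_refl [simp]: "x \<doteq> x" by (simp add: rcong_def)
lemma rcong_sym: "x \<doteq> y \<Longrightarrow> y \<doteq> x" by (simp add: rcong_def)
lemma rcong_trans [trans]: "x \<doteq> y \<Longrightarrow> y \<doteq> z \<Longrightarrow> x \<doteq> z" by (simp add: rcong_def)

lemma rcong_iff: "x \<doteq> y \<longleftrightarrow> [fst x = fst y] (mod P^2) \<and> [snd x = snd y] (mod P)"
  by (simp add: rcong_def rnorm_def cong_def prod_eq_iff)

lemma rcongI: "fst x = fst y + P^2 * q \<Longrightarrow> snd x = snd y + P * q' \<Longrightarrow> x \<doteq> y"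
  unfolding rcong_iff by (blast intro: cong_of_eq_mult)

lemma rcongE:
  assumes "x \<doteq> y"
  obtains q q' where "fst x = fst y + P^2 * q" "snd x = snd y + P * q'"
  using assms unfolding rcong_iff cong_iff_lin by (metis cong_iff_lin cong_sym)

lemma rnorm_rcong: "rnorm x \<doteq> x"
  by (simp add: rcong_def rnorm_def)

lemma rnorm_eqI: "x \<doteq> y \<Longrightarrow> rnorm x = rnorm y"
  by (simp add: rcong_def)

lemma rnorm_idem [simp]: "rnorm (rnorm x) = rnorm x"
  by (simp add: rnorm_def)

lemma rnorm_fixed_iff: "rnorm x = x \<longleftrightarrow> fst x \<in> {0..<P^2} \<and> snd x \<in> {0..<P}"
proof
  assume "rnorm x = x"
  then have "fst x mod P^2 = fst x" "snd x mod P = snd x" by (auto simp: rnorm_def prod_eq_iff)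
  moreover have "fst x mod P^2 \<in> {0..<P^2}" "snd x mod P \<in> {0..<P}"
    using P_lt_P_square by simp_all
  ultimately show "fst x \<in> {0..<P^2} \<and> snd x \<in> {0..<P}" by simp
qed (auto simp: rnorm_def prod_eq_iff)

lemma rnorm_one [simp]: "rnorm (1, 0) = (1, 0)"
  using P_lt_P_square by (simp add: rnorm_fixed_iff)

lemma cong_square_imp_cong: "[a = b] (mod P^2) \<Longrightarrow> [a = b] (mod P)"
  by (metis cong_dvd_modulus dvd_triv_left power2_eq_square)

lemma cong_mult_P: "[a = b] (mod P) \<Longrightarrow> [P * a = P * b] (mod P^2)"
  by (metis cong_scalar_left cong_mult_lcancel power2_eq_square cong_def mod_mult_mult1)

lemma rmult_rcong: "x \<doteq> x' \<Longrightarrow> y \<doteq> y' \<Longrightarrow> rmult x y \<doteq> rmult x' y'"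
  unfolding rcong_iff rmult_def
  by (auto intro!: cong_add cong_mult cong_mult_P dest: cong_square_imp_cong)

lemma add_rcong: "x \<doteq> x' \<Longrightarrow> y \<doteq> y' \<Longrightarrow> x + y \<doteq> x' + y'"
  unfolding rcong_iff by (auto intro: cong_add)

lemma rconj_rcong: "x \<doteq> x' \<Longrightarrow> rconj s x \<doteq> rconj s x'"
  unfolding rcong_iff rconj_def by (auto intro: cong_minus_minus_iff[THEN iffD2])

lemma rpow_rcong: "x \<doteq> x' \<Longrightarrow> rpow x n \<doteq> rpow x' n"
  by (induction n) (auto intro: rmult_rcong)

lemma sum_rcong: "(\<And>l. l < (n::nat) \<Longrightarrow> f l \<doteq> g l) \<Longrightarrow> (\<Sum>l<n. f l) \<doteq> (\<Sum>l<n. g l)"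
  by (induction n) (auto intro: add_rcong)

lemma add_rcong_cancel: "v + x \<doteq> v + y \<Longrightarrow> x \<doteq> y"
  using add_rcong[OF rcong_refl[of "- v"], of "v + x" "v + y"] by (simp add: add.assoc[symmetric])

lemma rmult_assoc: "rmult (rmult x y) z = rmult x (rmult y z)"
  by (simp add: rmult_def algebra_simps)

lemma rmult_comm: "rmult x y = rmult y x"
  by (simp add: rmult_def algebra_simps)

lemma rmult_left_commute: "rmult x (rmult y z) = rmult y (rmult x z)"
  by (metis rmult_assoc rmult_comm)

lemma rmult_one [simp]: "rmult (1, 0) x = x" "rmult x (1, 0) = x"
  by (simp_all add: rmult_def)

lemma rmult_add: "rmult x (y + z) = rmult x y + rmult x z" "rmult (y + z) x = rmult y x + rmult z x"
  by (simp_all add: rmult_def algebra_simps)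

lemma rmult_diff: "rmult (y - z) x = rmult y x - rmult z x"
  by (simp add: rmult_def algebra_simps)

lemma rpow_add: "rpow x (m + n) = rmult (rpow x m) (rpow x n)"
  by (induction n) (simp_all add: rmult_assoc)

lemma rpow_mult: "rpow x (m * n) = rpow (rpow x m) n"
  by (induction n) (simp_all add: rpow_add rmult_comm)

lemma rpow_one_rcong: "rpow x n \<doteq> (1, 0) \<Longrightarrow> rpow x (n * m) \<doteq> (1, 0)"
proof -
  assume x: "rpow x n \<doteq> (1, 0)"
  have "rpow (1, 0) m = (1, 0)" by (induction m) simp_all
  then show ?thesis using rpow_rcong[OF x, of m] by (simp add: rpow_mult)
qed

lemma rconj_rmult: "rconj s (rmult x y) = rmult (rconj s x) (rconj s y)"
  by (simp add: rconj_def rmult_def)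

lemma rconj_add: "rconj s (x + y) = rconj s x + rconj s y"
  by (simp add: rconj_def)

lemma rconj_rpow: "rconj s (rpow x n) = rpow (rconj s x) n"
  by (induction n) (simp_all add: rconj_rmult, simp add: rconj_def)

lemma rconj_rconj [simp]: "rconj s (rconj s x) = x"
  by (simp add: rconj_def)

lemma rconj_scalar [simp]: "rconj s (c, 0) = (c, 0)"
  by (simp add: rconj_def)

lemma rconj_compose: "rconj s (rconj s' x) = rconj (s \<noteq> s') x"
  by (simp add: rconj_def)

lemma rpow_u: "rpow u n \<doteq> (1 + P * (int n * half + int (n choose 2)), int n)"
proof (induction n)
  case 0
  then show ?case by (simp add: numeral_2_eq_2)
next
  case (Suc n)
  have "rpow u (Suc n) \<doteq> rmult (1 + P * (int n * half + int (n choose 2)), int n) u"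
    using rmult_rcong[OF Suc.IH rcong_refl] by simp
  also have "\<dots> \<doteq> (1 + P * (int (Suc n) * half + int (Suc n choose 2)), int (Suc n))"
    by (rule rcongI[where q = "half * (int n * half + int (n choose 2))"
          and q' = "int n * half + int (n choose 2) + int n * half"])
      (simp_all add: rmult_def u_def numeral_2_eq_2 algebra_simps power2_eq_square)
  finally show ?case .
qed

lemma rpow_u_p: "rpow u p \<doteq> (1, 0)"
proof -
  obtain q where q: "int (p choose 2) = P * q"
    using P_dvd_choose[of 2] p_ge_5 by (auto elim: dvdE)
  have "(1 + P * (P * half + int (p choose 2)), P) \<doteq> (1, 0)"
    by (rule rcongI[where q = "half + q" and q' = 1]) (simp_all add: q algebra_simps power2_eq_square)
  with rpow_u show ?thesis by (rule rcong_trans)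
qed

lemma rpow_u_mod: "rpow u n \<doteq> rpow u (n mod p)"
proof -
  have "rpow u n = rmult (rpow u (p * (n div p))) (rpow u (n mod p))"
    by (metis div_mult_mod_eq mult.commute rpow_add)
  also have "\<dots> \<doteq> rmult (1, 0) (rpow u (n mod p))"
    by (rule rmult_rcong[OF rpow_one_rcong[OF rpow_u_p] rcong_refl])
  finally show ?thesis by simp
qed

lemma rpow_u_pred: "rpow u (p - 1) \<doteq> rconj True u"
proof -
  have "fst (rmult u (rconj True u)) = 1 + P * (2 * half) - P + P^2 * (half * half)"
    by (simp add: rmult_def u_def rconj_def power2_eq_square algebra_simps)
  also have "\<dots> = 1 + P^2 * (1 + half * half)"
    by (simp only: two_half) (simp add: algebra_simps power2_eq_square)
  finally have "rmult u (rconj True u) \<doteq> (1, 0)"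
    by (intro rcongI[where q = "1 + half * half" and q' = 0]) (simp_all add: rmult_def u_def rconj_def)
  then have "rmult (rpow u (p - 1)) (1, 0) \<doteq> rmult (rpow u (p - 1)) (rmult u (rconj True u))"
    by (intro rmult_rcong rcong_refl) (rule rcong_sym)
  also have "\<dots> = rmult (rpow u (Suc (p - 1))) (rconj True u)"
    by (simp add: rmult_assoc)
  also have "\<dots> \<doteq> rmult (1, 0) (rconj True u)"
    using p_pos rpow_u_p by (intro rmult_rcong rcong_refl) simp
  finally show ?thesis by simp
qed

definition conj_exp :: "bool \<Rightarrow> nat \<Rightarrow> nat" where
  "conj_exp s k = (if s then (k * (p - 1)) mod p else k)"

lemma conj_exp_less: "k < p \<Longrightarrow> conj_exp s k < p"
  using p_pos by (simp add: conj_exp_def)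

lemma conj_exp_add: "(conj_exp s k + conj_exp s l) mod p = conj_exp s ((k + l) mod p)"
  by (simp add: conj_exp_def mod_add_eq mod_mult_left_eq add_mult_distrib)

lemma conj_exp_compose: "k < p \<Longrightarrow> conj_exp s (conj_exp s' k) = conj_exp (s \<noteq> s') k"
proof -
  assume k: "k < p"
  define q where "q = p - 2"
  have "p = q + 2" using p_ge_5 by (simp add: q_def)
  then have "(p - 1) * (p - 1) = 1 + q * p" by (simp add: algebra_simps)
  then have "((p - 1) * (p - 1)) mod p = 1 mod p" by (simp only: mod_mult_self1)
  then have sq: "((p - 1) * (p - 1)) mod p = 1" using p_ge_5 by simp
  have "(k * (p - 1) mod p * (p - 1)) mod p = (k * ((p - 1) * (p - 1))) mod p"
    by (simp add: mod_mult_left_eq mult.assoc)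
  also have "\<dots> = (k * (((p - 1) * (p - 1)) mod p)) mod p" by (simp add: mod_mult_right_eq)
  also have "\<dots> = k" using k by (simp only: sq) simp
  finally show ?thesis using k by (simp add: conj_exp_def)
qed

lemma rconj_rpow_u: "rconj s (rpow u k) \<doteq> rpow u (conj_exp s k)"
proof (cases s)
  case True
  have "rconj s (rpow u k) = rpow (rconj True u) k" using True by (simp add: rconj_rpow)
  also have "\<dots> \<doteq> rpow (rpow u (p - 1)) k" by (intro rpow_rcong rcong_sym[OF rpow_u_pred])
  also have "\<dots> \<doteq> rpow u (conj_exp s k)"
    using True rpow_u_mod[of "k * (p - 1)"] by (simp add: conj_exp_def flip: rpow_mult mult.commute)
  finally show ?thesis .
qed (simp add: rconj_def conj_exp_def)

lemma rpow_u_mult_pred: "rpow u (l * (p - 1)) \<doteq> rconj True (rpow u l)"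
proof -
  have "rconj True (rpow u l) \<doteq> rpow u (l * (p - 1) mod p)"
    using rconj_rpow_u[of True l] by (simp add: conj_exp_def)
  then show ?thesis using rpow_u_mod rcong_sym rcong_trans by blast
qed

lemma sum_rpow_u:
  "(\<Sum>l<n. rpow u l) \<doteq> (int n + P * (half * int (n choose 2) + int (n choose 3)), int (n choose 2))"
proof (induction n)
  case 0
  then show ?case by (simp add: numeral_2_eq_2 numeral_3_eq_3 zero_prod_def)
next
  case (Suc n)
  have "(\<Sum>l<Suc n. rpow u l) \<doteq>
      (int n + P * (half * int (n choose 2) + int (n choose 3)), int (n choose 2)) +
      (1 + P * (int n * half + int (n choose 2)), int n)"
    by (simp only: sum.lessThan_Suc) (intro add_rcong Suc.IH rpow_u)
  also have "\<dots> = (int (Suc n) + P * (half * int (Suc n choose 2) + int (Suc n choose 3)), int (Suc n choose 2))"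
    by (simp add: numeral_2_eq_2 numeral_3_eq_3 algebra_simps)
  finally show ?case .
qed

lemma sum_rpow_u_p: "(\<Sum>l<p. rpow u l) \<doteq> (P, 0)"
proof -
  obtain q where q: "int (p choose 2) = P * q"
    using P_dvd_choose[of 2] p_ge_5 by (auto elim: dvdE)
  obtain r where r: "int (p choose 3) = P * r"
    using P_dvd_choose[of 3] p_ge_5 by (auto elim: dvdE)
  have "(P + P * (half * int (p choose 2) + int (p choose 3)), int (p choose 2)) \<doteq> (P, 0)"
    by (rule rcongI[where q = "half * q + r" and q' = q]) (simp_all add: q r algebra_simps power2_eq_square)
  with sum_rpow_u show ?thesis by (rule rcong_trans)
qed

lemma Pair_zero_zero [simp]: "(0::int, 0::int) = 0"
  by (simp add: zero_prod_def)

lemma rnorm_zero [simp]: "rnorm 0 = 0"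
  by (simp add: rnorm_def)

lemma rmult_zero [simp]: "rmult x 0 = 0"
  by (simp add: rmult_def)

lemma rconj_sum: "rconj s (\<Sum>l<(n::nat). f l) = (\<Sum>l<n. rconj s (f l))"
  by (induction n) (simp_all add: rconj_add, simp add: rconj_def)

lemma rcong_iff_diff: "x \<doteq> y \<longleftrightarrow> x - y \<doteq> 0"
  by (simp add: rcong_iff cong_iff_dvd_diff)

lemma rpow_u_minus_one: "rpow u k - (1, 0) \<doteq> (P * (int k * half + int (k choose 2)), int k)"
proof -
  have "rpow u k - (1, 0) \<doteq> (1 + P * (int k * half + int (k choose 2)), int k) - (1, 0)"
    using add_rcong[OF rpow_u rcong_refl[of "- (1, 0)"]] by (simp only: diff_conv_add_uminus)
  then show ?thesis by simp
qed

lemma rmult_rpow_u_minus_one_twice: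
  "rmult (rpow u l - (1, 0)) (rmult (rpow u k - (1, 0)) v) \<doteq> rmult (P * (int l * int k), 0) v"
proof -
  define a where "a = int l * half + int (l choose 2)"
  define b where "b = int k * half + int (k choose 2)"
  have "rmult (rpow u l - (1, 0)) (rmult (rpow u k - (1, 0)) v) \<doteq> rmult (rmult (P * a, int l) (P * b, int k)) v"
    unfolding rmult_assoc a_def b_def by (intro rmult_rcong rpow_u_minus_one rcong_refl)
  also have "rmult (P * a, int l) (P * b, int k) \<doteq> (P * (int l * int k), 0)"
    by (rule rcongI[where q = "a * b" and q' = "a * int k + b * int l"])
      (simp_all add: rmult_def algebra_simps power2_eq_square)
  then have "rmult (rmult (P * a, int l) (P * b, int k)) v \<doteq> rmult (P * (int l * int k), 0) v"
    by (intro rmult_rcong rcong_refl)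
  finally show ?thesis .
qed

lemma rmult_P_scalar_rcong_zero: "rmult (P * n, 0) v \<doteq> 0 \<longleftrightarrow> P dvd n * fst v"
proof -
  have "rmult (P * n, 0) v \<doteq> 0 \<longleftrightarrow> P * P dvd P * (n * fst v)"
    by (simp add: rcong_iff rmult_def cong_0_iff power2_eq_square mult.assoc)
  also have "\<dots> \<longleftrightarrow> P dvd n * fst v"
    using P_lt_P_square by simp
  finally show ?thesis .
qed

lemma rpow_u_annihilator:
  assumes w: "w \<doteq> rmult (rpow u k - (1, 0)) v" and fix_w: "rmult (rpow u l) w \<doteq> w"
  shows "P dvd int l * int k * fst v"
proof -
  have "rmult (P * (int l * int k), 0) v \<doteq> rmult (rpow u l - (1, 0)) (rmult (rpow u k - (1, 0)) v)"
    by (rule rcong_sym[OF rmult_rpow_u_minus_one_twice])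
  also have "\<dots> \<doteq> rmult (rpow u l - (1, 0)) w"
    by (intro rmult_rcong rcong_refl rcong_sym[OF w])
  also have "\<dots> = rmult (rpow u l) w - w"
    by (simp add: rmult_diff)
  also have "\<dots> \<doteq> 0"
    using fix_w by (simp add: rcong_iff_diff[symmetric])
  finally show ?thesis
    by (simp add: rmult_P_scalar_rcong_zero mult.assoc)
qed

lemma rpow_u_square_relation:
  assumes w: "w \<doteq> rmult (rpow u k - (1, 0)) v" and rel: "rmult (rpow u k) w \<doteq> rmult (P, 0) v + w"
  shows "P dvd (int k * int k - 1) * fst v"
proof -
  have "rmult (P * (int k * int k), 0) v \<doteq> rmult (rpow u k - (1, 0)) (rmult (rpow u k - (1, 0)) v)"
    by (rule rcong_sym[OF rmult_rpow_u_minus_one_twice])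
  also have "\<dots> \<doteq> rmult (rpow u k - (1, 0)) w"
    by (intro rmult_rcong rcong_refl rcong_sym[OF w])
  also have "\<dots> = rmult (rpow u k) w - w"
    by (simp add: rmult_diff)
  also have "\<dots> \<doteq> rmult (P, 0) v"
    using add_rcong[OF rel rcong_refl[of "- w"]] by simp
  finally have "rmult (P * (int k * int k), 0) v - rmult (P, 0) v \<doteq> 0"
    by (simp add: rcong_iff_diff[symmetric])
  moreover have "rmult (P * (int k * int k), 0) v - rmult (P, 0) v = rmult (P * (int k * int k - 1), 0) v"
    by (simp add: rmult_def algebra_simps)
  ultimately show ?thesis
    by (simp add: rmult_P_scalar_rcong_zero)
qed

lemma rpow_u_conj_exp_one: "rpow u (conj_exp s 1) - (1, 0) \<doteq> rconj s (P * half, 1)"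
proof (cases s)
  case True
  have "rpow u (p - 1) - (1, 0) \<doteq> rconj True u - (1, 0)"
    using add_rcong[OF rpow_u_pred rcong_refl[of "- (1, 0)"]] by (simp only: diff_conv_add_uminus)
  then show ?thesis using True p_ge_5 by (simp add: conj_exp_def u_def rconj_def)
qed (simp add: conj_exp_def u_def rconj_def)

definition runit :: "int \<times> int \<Rightarrow> bool" where
  "runit r \<longleftrightarrow> \<not> P dvd fst r"

lemma runit_rconj [simp]: "runit (rconj s r) = runit r"
  by (simp add: runit_def rconj_def)

lemma runit_inverse:
  assumes "runit r"
  obtains r' where "rmult r r' \<doteq> (1, 0)"
proof -
  obtain a b where r: "r = (a, b)" by (cases r)
  define N where "N = a * a - P * (b * b)"
  have "\<not> P dvd N"
  proof
    assume "P dvd N"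
    moreover have "P dvd P * (b * b)" by simp
    ultimately have "P dvd a * a" unfolding N_def by (metis dvd_add_left_iff diff_add_cancel)
    then have "P dvd a" using prime_P by (meson prime_dvd_multD)
    then show False using assms r by (simp add: runit_def)
  qed
  then have "coprime N P"
    using prime_imp_coprime[OF prime_P] coprime_commute by blast
  then have "coprime N (P^2)" by simp
  then obtain y where y: "[N * y = 1] (mod P^2)" using cong_solve_coprime_int by blast
  have "fst (rmult r (a * y, - b * y)) = N * y" "snd (rmult r (a * y, - b * y)) = 0"
    by (simp_all add: r rmult_def N_def algebra_simps)
  then have "rmult r (a * y, - b * y) \<doteq> (1, 0)"
    unfolding rcong_iff using y by simp
  then show ?thesis by (rule that)
qed

end

section \<open>A model of G_7\<close>

context G7_model
begin

(* The semidirect product of (R, +) by <u>: the pair (x, k) stands for x u^k. *)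
definition M :: "((int \<times> int) \<times> nat) monoid" where
  "M = \<lparr>carrier = {(x, k). rnorm x = x \<and> k < p},
        monoid.mult = (\<lambda>(x, k) (y, l). (rnorm (x + rmult (rpow u k) y), (k + l) mod p)),
        one = (0, 0)\<rparr>"

lemma M_carrier: "(x, k) \<in> carrier M \<longleftrightarrow> rnorm x = x \<and> k < p"
  by (simp add: M_def)

lemma M_mult [simp]: "(x, k) \<otimes>\<^bsub>M\<^esub> (y, l) = (rnorm (x + rmult (rpow u k) y), (k + l) mod p)"
  by (simp add: M_def)

lemma M_one: "\<one>\<^bsub>M\<^esub> = (0, 0)"
  by (simp add: M_def)

lemma M_assoc:
  "rnorm (rnorm (x + rmult (rpow u k) y) + rmult (rpow u ((k + l) mod p)) z) =
   rnorm (x + rmult (rpow u k) (rnorm (y + rmult (rpow u l) z)))"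
proof (rule rnorm_eqI)
  have "rnorm (x + rmult (rpow u k) y) + rmult (rpow u ((k + l) mod p)) z \<doteq>
      (x + rmult (rpow u k) y) + rmult (rpow u (k + l)) z"
    by (intro add_rcong rmult_rcong rnorm_rcong rcong_refl rcong_sym[OF rpow_u_mod])
  also have "\<dots> = x + rmult (rpow u k) (y + rmult (rpow u l) z)"
    by (simp add: rpow_add rmult_add rmult_assoc add.assoc)
  also have "\<dots> \<doteq> x + rmult (rpow u k) (rnorm (y + rmult (rpow u l) z))"
    by (intro add_rcong rmult_rcong rcong_refl rcong_sym[OF rnorm_rcong])
  finally show "rnorm (x + rmult (rpow u k) y) + rmult (rpow u ((k + l) mod p)) z \<doteq>
      x + rmult (rpow u k) (rnorm (y + rmult (rpow u l) z))" .
qed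

lemma group_M: "group M"
proof (rule groupI)
  fix z assume z: "z \<in> carrier M"
  obtain x k where zk: "z = (x, k)" by (cases z)
  define l where "l = (p - k) mod p"
  have "(rnorm (- rmult (rpow u l) x), l) \<otimes>\<^bsub>M\<^esub> z = \<one>\<^bsub>M\<^esub>"
  proof -
    have "rnorm (rnorm (- rmult (rpow u l) x) + rmult (rpow u l) x) = rnorm (- rmult (rpow u l) x + rmult (rpow u l) x)"
      by (intro rnorm_eqI add_rcong rnorm_rcong rcong_refl)
    moreover have "(l + k) mod p = 0"
      using z by (simp add: zk l_def M_carrier mod_add_left_eq)
    ultimately show ?thesis by (simp add: zk M_one)
  qed
  moreover have "(rnorm (- rmult (rpow u l) x), l) \<in> carrier M"
    using p_pos by (simp add: M_carrier l_def)
  ultimately show "\<exists>y \<in> carrier M. y \<otimes>\<^bsub>M\<^esub> z = \<one>\<^bsub>M\<^esub>" by blast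
qed (auto simp: M_def M_assoc mod_add_left_eq mod_add_right_eq add.assoc p_pos)

lemma M_pow:
  "(x, k) [^]\<^bsub>M\<^esub> n = (rnorm (rmult (\<Sum>l<n. rpow u (l * k)) x), (n * k) mod p)"
proof (induction n)
  case 0
  then show ?case by (simp add: M_one rmult_def)
next
  case (Suc n)
  have "rnorm (rnorm (rmult (\<Sum>l<n. rpow u (l * k)) x) + rmult (rpow u ((n * k) mod p)) x)
      = rnorm (rmult (\<Sum>l<Suc n. rpow u (l * k)) x)"
  proof (rule rnorm_eqI)
    have "rnorm (rmult (\<Sum>l<n. rpow u (l * k)) x) + rmult (rpow u ((n * k) mod p)) x
        \<doteq> rmult (\<Sum>l<n. rpow u (l * k)) x + rmult (rpow u (n * k)) x"
      by (intro add_rcong rmult_rcong rnorm_rcong rcong_refl rcong_sym[OF rpow_u_mod])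
    also have "\<dots> = rmult (\<Sum>l<Suc n. rpow u (l * k)) x" by (simp add: rmult_add)
    finally show "rnorm (rmult (\<Sum>l<n. rpow u (l * k)) x) + rmult (rpow u ((n * k) mod p)) x
        \<doteq> rmult (\<Sum>l<Suc n. rpow u (l * k)) x" .
  qed
  then show ?case by (simp add: Suc mod_add_right_eq add.commute)
qed

lemma M_pow_level_0: "(x, 0) [^]\<^bsub>M\<^esub> n = (rnorm (int n * fst x, int n * snd x), 0)"
proof -
  have "(\<Sum>l<n. (1::int, 0::int)) = (int n, 0)"
    by (induction n) simp_all
  then show ?thesis using M_pow[of x 0 n] p_pos by (simp add: rmult_def)
qed

(* a = u^(-1), b = u - 1, c = u; the automorphisms are analysed through d = a c = 1 \<in> R. *)
definition aM :: "(int \<times> int) \<times> nat" where "aM = ((1, 0), p - 1)"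
definition bM :: "(int \<times> int) \<times> nat" where "bM = ((P * half, 1), 0)"
definition cM :: "(int \<times> int) \<times> nat" where "cM = (0, 1)"
definition dM :: "(int \<times> int) \<times> nat" where "dM = ((1, 0), 0)"

lemma half_bounds: "0 < half" "half < P"
  using two_half P_ge_5 by linarith+

lemma rnorm_bM: "rnorm (P * half, 1) = (P * half, 1)"
  using half_bounds P_lt_P_square by (simp add: rnorm_fixed_iff power2_eq_square)

lemma generators_in_M: "aM \<in> carrier M" "bM \<in> carrier M" "cM \<in> carrier M" "dM \<in> carrier M"
  using p_ge_5 rnorm_bM by (simp_all add: aM_def bM_def cM_def dM_def M_carrier)

lemma cM_pow: "cM [^]\<^bsub>M\<^esub> n = (0, n mod p)"
  using M_pow[of 0 1 n] by (simp add: cM_def rmult_def)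

lemma dM_eq: "dM = aM \<otimes>\<^bsub>M\<^esub> cM"
  using p_pos by (simp add: aM_def cM_def dM_def)

lemma aM_pow_p: "aM [^]\<^bsub>M\<^esub> p = ((P, 0), 0)"
proof -
  have "(\<Sum>l<p. rpow u (l * (p - 1))) \<doteq> (\<Sum>l<p. rconj True (rpow u l))"
    by (intro sum_rcong rpow_u_mult_pred)
  also have "\<dots> = rconj True (\<Sum>l<p. rpow u l)"
    by (simp add: rconj_sum)
  also have "\<dots> \<doteq> rconj True (P, 0)" by (rule rconj_rcong[OF sum_rpow_u_p])
  finally have "rnorm (\<Sum>l<p. rpow u (l * (p - 1))) = rnorm (P, 0)"
    by (simp add: rnorm_eqI)
  also have "\<dots> = (P, 0)" using P_lt_P_square by (simp add: rnorm_fixed_iff)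
  finally show ?thesis
    using M_pow[of "(1, 0)" "p - 1" p] by (simp add: aM_def)
qed

lemma aM_pow_Suc_p: "aM [^]\<^bsub>M\<^esub> (1 + p) = ((P + 1, 0), p - 1)"
proof -
  interpret group M by (rule group_M)
  have "5 * P \<le> P * P" using P_ge_5 by simp
  then have "P + 1 < P^2" using P_ge_5 unfolding power2_eq_square by linarith
  then have "rnorm (P + 1, 0) = (P + 1, 0)" using P_ge_5 by (simp add: rnorm_fixed_iff)
  moreover have "aM [^]\<^bsub>M\<^esub> (1 + p) = aM [^]\<^bsub>M\<^esub> p \<otimes>\<^bsub>M\<^esub> aM" by simp
  ultimately show ?thesis
    using p_pos unfolding aM_pow_p by (simp add: aM_def)
qed

lemma M_rel_ba: "bM \<otimes>\<^bsub>M\<^esub> aM = aM [^]\<^bsub>M\<^esub> (1 + p) \<otimes>\<^bsub>M\<^esub> bM"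
proof -
  have "rnorm ((P + 1, 0) + rmult (rpow u (p - 1)) (P * half, 1))
      = rnorm ((P + 1, 0) + rmult (rconj True u) (P * half, 1))"
    by (intro rnorm_eqI add_rcong rmult_rcong rpow_u_pred rcong_refl)
  also have "\<dots> = rnorm ((P * half, 1) + (1, 0))"
    by (intro rnorm_eqI rcongI[where q = "half * half" and q' = 0])
      (simp_all add: rmult_def rconj_def u_def algebra_simps power2_eq_square)
  finally show ?thesis using p_pos unfolding aM_pow_Suc_p by (simp add: aM_def bM_def)
qed

lemma M_rel_ca: "cM \<otimes>\<^bsub>M\<^esub> aM = aM [^]\<^bsub>M\<^esub> (1 + p) \<otimes>\<^bsub>M\<^esub> bM \<otimes>\<^bsub>M\<^esub> cM"
proof -
  have "aM [^]\<^bsub>M\<^esub> (1 + p) \<otimes>\<^bsub>M\<^esub> bM = (rnorm ((P * half, 1) + (1, 0)), p - 1)"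
    using M_rel_ba p_pos by (simp add: aM_def bM_def)
  then show ?thesis using p_pos by (simp add: aM_def cM_def u_def add.commute)
qed

lemma M_rel_cb: "cM \<otimes>\<^bsub>M\<^esub> bM = aM [^]\<^bsub>M\<^esub> p \<otimes>\<^bsub>M\<^esub> bM \<otimes>\<^bsub>M\<^esub> cM"
proof -
  have "P * (2 * half) = P * (P + 1)" by (simp only: two_half)
  then have "rnorm (rmult u (P * half, 1)) = rnorm ((P, 0) + (P * half, 1))"
    by (intro rnorm_eqI rcongI[where q = "half * half" and q' = "P + 1"])
      (simp_all add: rmult_def u_def algebra_simps power2_eq_square)
  then show ?thesis using p_pos unfolding aM_pow_p by (simp add: bM_def cM_def)
qed

lemma bM_pow_p: "bM [^]\<^bsub>M\<^esub> p = \<one>\<^bsub>M\<^esub>"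
  unfolding bM_def by (subst M_pow_level_0) (simp add: rnorm_def M_one power2_eq_square)

lemma aM_pow_p_square: "aM [^]\<^bsub>M\<^esub> (p^2) = \<one>\<^bsub>M\<^esub>"
proof -
  interpret group M by (rule group_M)
  have "aM [^]\<^bsub>M\<^esub> (p^2) = (aM [^]\<^bsub>M\<^esub> p) [^]\<^bsub>M\<^esub> p"
    using generators_in_M(1) by (simp add: nat_pow_pow power2_eq_square)
  also have "\<dots> = ((P, 0), 0) [^]\<^bsub>M\<^esub> p"
    by (simp only: aM_pow_p)
  also have "\<dots> = \<one>\<^bsub>M\<^esub>"
    by (subst M_pow_level_0) (simp add: rnorm_def M_one power2_eq_square)
  finally show ?thesis .
qed

lemma G7_relations_M: "G7_relations M p aM bM cM"
  unfolding G7_relations_def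
  using generators_in_M aM_pow_p_square bM_pow_p cM_pow[of p] M_rel_ba M_rel_ca M_rel_cb
  by (simp add: M_one)

lemma M_rel_cd: "cM \<otimes>\<^bsub>M\<^esub> dM = dM \<otimes>\<^bsub>M\<^esub> bM \<otimes>\<^bsub>M\<^esub> cM"
  using p_pos by (simp add: cM_def dM_def bM_def u_def add.commute)

lemma M_rel_bd: "bM \<otimes>\<^bsub>M\<^esub> dM = dM \<otimes>\<^bsub>M\<^esub> bM"
  by (simp add: dM_def bM_def add.commute)

lemma M_rel_cb_dM: "cM \<otimes>\<^bsub>M\<^esub> bM = dM [^]\<^bsub>M\<^esub> p \<otimes>\<^bsub>M\<^esub> bM \<otimes>\<^bsub>M\<^esub> cM"
proof -
  have "dM [^]\<^bsub>M\<^esub> p = aM [^]\<^bsub>M\<^esub> p"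
    using P_lt_P_square by (simp add: dM_def M_pow_level_0 aM_pow_p rnorm_fixed_iff)
  then show ?thesis by (simp add: M_rel_cb)
qed

lemma carrier_M: "carrier M = ({0..<P^2} \<times> {0..<P}) \<times> {..<p}"
  by (auto simp: M_def rnorm_fixed_iff)

lemma finite_carrier_M: "finite (carrier M)"
  by (simp add: carrier_M)

lemma card_carrier_M: "card (carrier M) = p^4"
proof -
  have "card {0..<P^2} = p^2" by (simp flip: of_nat_power)
  then have "card (carrier M) = p^2 * p * p"
    by (simp add: carrier_M card_cartesian_product)
  also have "\<dots> = p^4" by (simp add: power_numeral_reduce)
  finally show ?thesis .
qed

lemma M_normal_form:
  assumes z: "((\<alpha>, \<beta>), k) \<in> carrier M"
  shows "((\<alpha>, \<beta>), k) =
    dM [^]\<^bsub>M\<^esub> nat ((\<alpha> - \<beta> * (P * half)) mod P^2) \<otimes>\<^bsub>M\<^esub> bM [^]\<^bsub>M\<^esub> nat \<beta> \<otimes>\<^bsub>M\<^esub> cM [^]\<^bsub>M\<^esub> k"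
proof -
  define m where "m = nat ((\<alpha> - \<beta> * (P * half)) mod P^2)"
  define n where "n = nat \<beta>"
  have zc: "rnorm (\<alpha>, \<beta>) = (\<alpha>, \<beta>)" "0 \<le> \<beta>" "k < p"
    using z by (auto simp: M_carrier rnorm_fixed_iff)
  have m: "int m = (\<alpha> - \<beta> * (P * half)) mod P^2"
    unfolding m_def using P_lt_P_square by simp
  have "rnorm (int m, 0) + rnorm (\<beta> * (P * half), \<beta>) \<doteq> (int m, 0) + (\<beta> * (P * half), \<beta>)"
    by (intro add_rcong rnorm_rcong)
  also have "\<dots> \<doteq> (\<alpha>, \<beta>)"
    unfolding rcong_iff by (simp add: m cong_def mod_add_left_eq)
  finally have "rnorm (rnorm (int m, 0) + rnorm (\<beta> * (P * half), \<beta>)) = (\<alpha>, \<beta>)"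
    using zc(1) by (metis rnorm_eqI rnorm_idem)
  moreover have "int n = \<beta>" using zc(2) by (simp add: n_def)
  ultimately show ?thesis
    unfolding m_def[symmetric] n_def[symmetric]
    using zc rnorm_bM by (simp add: dM_def bM_def cM_pow M_pow_level_0 mult.commute)
qed

lemma generate_M_dbc: "generate M {dM, bM, cM} = carrier M"
proof
  interpret group M by (rule group_M)
  show "generate M {dM, bM, cM} \<subseteq> carrier M"
    using generators_in_M by (intro generate_incl) auto
  show "carrier M \<subseteq> generate M {dM, bM, cM}"
  proof
    fix z assume z: "z \<in> carrier M"
    obtain \<alpha> \<beta> k where zk: "z = ((\<alpha>, \<beta>), k)" by (metis prod.collapse)
    have pow: "x [^]\<^bsub>M\<^esub> (n::nat) \<in> generate M {dM, bM, cM}" if "x \<in> {dM, bM, cM}" for x n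
    proof (induction n)
      case (Suc n)
      then show ?case using that by (simp add: generate.eng generate.incl)
    qed (simp add: generate.one)
    show "z \<in> generate M {dM, bM, cM}"
      unfolding zk M_normal_form[OF z[unfolded zk]] by (intro generate.eng pow) simp_all
  qed
qed

lemma generate_M_abc: "generate M {aM, bM, cM} = carrier M"
proof -
  interpret group M by (rule group_M)
  have "dM \<in> generate M {aM, bM, cM}"
    unfolding dM_eq by (auto intro: generate.eng generate.incl)
  then have "{dM, bM, cM} \<subseteq> generate M {aM, bM, cM}"
    by (auto intro: generate.incl)
  then have "generate M {dM, bM, cM} \<subseteq> generate M {aM, bM, cM}"
    by (rule generate_subgroup_incl[OF _ generate_is_subgroup]) (use generators_in_M in auto)
  moreover have "generate M {aM, bM, cM} \<subseteq> carrier M"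
    by (rule generate_incl) (use generators_in_M in auto)
  ultimately show ?thesis using generate_M_dbc by blast
qed

lemma generate_M_cM: "generate M {cM} = {(0, k) | k. k < p}"
  unfolding group.generate_pow_on_finite_carrier[OF group_M finite_carrier_M generators_in_M(3)]
proof (intro equalityI subsetI)
  fix z assume "z \<in> {cM [^]\<^bsub>M\<^esub> k | k. k \<in> (UNIV :: nat set)}"
  then obtain k :: nat where "z = cM [^]\<^bsub>M\<^esub> k" by blast
  then show "z \<in> {(0, k) | k. k < p}" using p_pos by (simp add: cM_pow)
next
  fix z :: "(int \<times> int) \<times> nat" assume "z \<in> {(0, k) | k. k < p}"
  then obtain k where "z = (0, k)" "k < p" by blast
  then have "z = cM [^]\<^bsub>M\<^esub> k" by (simp add: cM_pow)
  then show "z \<in> {cM [^]\<^bsub>M\<^esub> k | k. k \<in> (UNIV :: nat set)}" by blast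
qed

end

section \<open>Automorphisms of the model\<close>

lemma prime_square_eq_one:
  fixes p k :: nat
  assumes "Factorial_Ring.prime p" "0 < k" "k < p" "[k * k = 1] (mod p)"
  shows "k = 1 \<or> k = p - 1"
proof -
  have "[int k * int k = 1] (mod int p)" using assms(4) by (metis cong_int_iff of_nat_1 of_nat_mult)
  then have "int p dvd (int k - 1) * (int k + 1)"
    by (simp add: cong_iff_dvd_diff algebra_simps)
  then have "int p dvd int k - 1 \<or> int p dvd int k + 1"
    using assms(1) by (simp add: prime_dvd_mult_iff)
  then show ?thesis
  proof
    assume "int p dvd int k - 1"
    then have "\<not> 0 < int k - 1" using zdvd_not_zless[of "int k - 1" "int p"] assms(3) by auto
    then show ?thesis using assms(2) by simp
  next
    assume "int p dvd int k + 1"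
    then have "int p \<le> int k + 1" by (rule zdvd_imp_le) simp
    then show ?thesis using assms(3) by linarith
  qed
qed

context G7_model
begin

(* twist s r maps x u^k to r \<sigma>^s(x) u^(\<plusminus>k), where \<sigma> = rconj True is the conjugation \<epsilon> \<mapsto> -\<epsilon>. *)
definition twist :: "bool \<Rightarrow> int \<times> int \<Rightarrow> (int \<times> int) \<times> nat \<Rightarrow> (int \<times> int) \<times> nat" where
  "twist s r = (\<lambda>z \<in> carrier M. (rnorm (rmult r (rconj s (fst z))), conj_exp s (snd z)))"

lemma twist_closed: "z \<in> carrier M \<Longrightarrow> twist s r z \<in> carrier M"
  by (cases z) (simp add: twist_def M_carrier conj_exp_less)

lemma twist_rcong: "r \<doteq> r' \<Longrightarrow> twist s r = twist s r'"
  unfolding twist_def by (intro ext) (simp add: rnorm_eqI rmult_rcong)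

lemma twist_hom: "twist s r \<in> hom M M"
proof (rule homI)
  fix z assume "z \<in> carrier M"
  then show "twist s r z \<in> carrier M" by (rule twist_closed)
next
  fix z z' assume z: "z \<in> carrier M" and z': "z' \<in> carrier M"
  obtain x k where zk: "z = (x, k)" by (cases z)
  obtain y l where zl: "z' = (y, l)" by (cases z')
  have "rnorm (rmult r (rconj s (rnorm (x + rmult (rpow u k) y)))) =
      rnorm (rnorm (rmult r (rconj s x)) + rmult (rpow u (conj_exp s k)) (rnorm (rmult r (rconj s y))))"
  proof (rule rnorm_eqI)
    have "rmult r (rconj s (rnorm (x + rmult (rpow u k) y))) \<doteq> rmult r (rconj s (x + rmult (rpow u k) y))"
      by (intro rmult_rcong rcong_refl rconj_rcong rnorm_rcong)
    also have "\<dots> = rmult r (rconj s x) + rmult (rconj s (rpow u k)) (rmult r (rconj s y))"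
      by (simp add: rconj_add rconj_rmult rmult_add rmult_left_commute)
    also have "\<dots> \<doteq> rnorm (rmult r (rconj s x)) + rmult (rpow u (conj_exp s k)) (rnorm (rmult r (rconj s y)))"
      by (intro add_rcong rmult_rcong rconj_rpow_u rcong_sym[OF rnorm_rcong])
    finally show "rmult r (rconj s (rnorm (x + rmult (rpow u k) y))) \<doteq>
        rnorm (rmult r (rconj s x)) + rmult (rpow u (conj_exp s k)) (rnorm (rmult r (rconj s y)))" .
  qed
  moreover have "z \<otimes>\<^bsub>M\<^esub> z' \<in> carrier M"
    using z z' group.is_monoid[OF group_M] by (simp add: monoid.m_closed)
  ultimately show "twist s r (z \<otimes>\<^bsub>M\<^esub> z') = twist s r z \<otimes>\<^bsub>M\<^esub> twist s r z'"
    using z z' by (simp add: twist_def zk zl conj_exp_add)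
qed

lemma twist_compose:
  assumes z: "z \<in> carrier M"
  shows "twist s r (twist s' r' z) = twist (s \<noteq> s') (rmult r (rconj s r')) z"
proof -
  obtain x k where zk: "z = (x, k)" by (cases z)
  have "rnorm (rmult r (rconj s (rnorm (rmult r' (rconj s' x))))) =
      rnorm (rmult (rmult r (rconj s r')) (rconj (s \<noteq> s') x))"
  proof (rule rnorm_eqI)
    have "rmult r (rconj s (rnorm (rmult r' (rconj s' x)))) \<doteq> rmult r (rconj s (rmult r' (rconj s' x)))"
      by (intro rmult_rcong rcong_refl rconj_rcong rnorm_rcong)
    also have "\<dots> = rmult (rmult r (rconj s r')) (rconj (s \<noteq> s') x)"
      by (simp add: rconj_rmult rconj_compose rmult_assoc)
    finally show "rmult r (rconj s (rnorm (rmult r' (rconj s' x)))) \<doteq>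
        rmult (rmult r (rconj s r')) (rconj (s \<noteq> s') x)" .
  qed
  then show ?thesis
    using z twist_closed[OF z] by (simp add: twist_def zk M_carrier conj_exp_compose)
qed

lemma twist_id: "twist False (1, 0) = (\<lambda>z \<in> carrier M. z)"
  unfolding twist_def by (intro ext) (auto simp: M_carrier rconj_def conj_exp_def)

lemma twist_auto:
  assumes "runit r"
  shows "twist s r \<in> auto M"
proof -
  obtain r' where r': "rmult (rconj s r) r' \<doteq> (1, 0)"
    using runit_inverse[of "rconj s r"] assms by auto
  have "rmult r (rconj s r') = rconj s (rmult (rconj s r) r')"
    by (simp add: rconj_rmult)
  also have "\<dots> \<doteq> (1, 0)" using rconj_rcong[OF r', of s] by simp
  finally have inv1: "twist s r (twist s r' z) = z" if "z \<in> carrier M" for z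
    using that by (simp add: twist_compose twist_rcong twist_id)
  have inv2: "twist s r' (twist s r z) = z" if "z \<in> carrier M" for z
    using that r' by (simp add: twist_compose twist_rcong[of _ "(1, 0)"] twist_id rmult_comm)
  have "bij_betw (twist s r) (carrier M) (carrier M)"
    by (rule bij_betw_byWitness[where f' = "twist s r'"]) (auto simp: inv1 inv2 twist_closed)
  then show ?thesis
    using twist_hom by (simp add: auto_def Bij_def twist_def)
qed

lemma twist_cM_pow: "k < p \<Longrightarrow> twist s r (0, k) = (0, conj_exp s k)"
  by (simp add: twist_def M_carrier rconj_def)

lemma conj_exp_image: "conj_exp s ` {..<p} = {..<p}"
proof (intro equalityI subsetI)
  fix k assume "k \<in> {..<p}"
  then have "k = conj_exp s (conj_exp s k)" "conj_exp s k \<in> {..<p}"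
    using conj_exp_compose[of k s s] by (simp_all add: conj_exp_less conj_exp_def)
  then show "k \<in> conj_exp s ` {..<p}" by blast
qed (auto simp: conj_exp_less)

lemma twist_cyclic: "twist s r ` generate M {cM} = generate M {cM}"
proof -
  have K: "generate M {cM} = (\<lambda>k. (0, k)) ` {..<p}"
    by (auto simp: generate_M_cM)
  have "twist s r ` generate M {cM} = (\<lambda>k. (0, conj_exp s k)) ` {..<p}"
    unfolding K image_image by (rule image_cong) (simp_all add: twist_cM_pow)
  also have "\<dots> = (\<lambda>k. (0, k)) ` conj_exp s ` {..<p}"
    by (simp add: image_image)
  finally show ?thesis by (simp add: conj_exp_image K)
qed

lemma twist_in_AutK: "runit r \<Longrightarrow> twist s r \<in> carrier (AutK M (generate M {cM}))"
  by (simp add: AutK_carrier twist_auto twist_cyclic)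

lemma twist_generators:
  "twist s r dM = (rnorm r, 0)"
  "twist s r bM = (rnorm (rmult r (rconj s (P * half, 1))), 0)"
  "twist s r cM = (0, conj_exp s 1)"
  using generators_in_M by (simp_all add: twist_def dM_def bM_def cM_def rconj_def conj_exp_def)

lemma fst_mod_hom: "(\<lambda>z. fst (fst z) mod P) \<in> hom M (integer_mod_group p)"
proof (rule homI)
  fix z assume "z \<in> carrier M"
  then show "fst (fst z) mod P \<in> carrier (integer_mod_group p)"
    using p_pos by (simp add: carrier_integer_mod_group)
next
  fix z z' assume "z \<in> carrier M" "z' \<in> carrier M"
  obtain x k where zk: "z = (x, k)" by (cases z)
  obtain y l where zl: "z' = (y, l)" by (cases z')
  obtain q q' where "fst (rpow u k) = fst (1 + P * (int k * half + int (k choose 2)), int k) + P^2 * q"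
    "snd (rpow u k) = snd (1 + P * (int k * half + int (k choose 2)), int k) + P * q'"
    using rpow_u[of k] by (rule rcongE)
  then have "[fst (x + rmult (rpow u k) y) = fst x + fst y] (mod P)"
    by (intro cong_of_eq_mult[where q = "((int k * half + int (k choose 2)) + P * q) * fst y + snd (rpow u k) * snd y"])
      (simp add: rmult_def algebra_simps power2_eq_square)
  then have "fst (x + rmult (rpow u k) y) mod P^2 mod P = (fst x mod P + fst y mod P) mod P"
    by (simp add: cong_def mod_mod_cancel mod_add_eq power2_eq_square)
  then have "fst (fst ((x, k) \<otimes>\<^bsub>M\<^esub> (y, l))) mod P = (fst x mod P + fst y mod P) mod P"
    by (simp add: rnorm_def)
  then show "fst (fst (z \<otimes>\<^bsub>M\<^esub> z')) mod P =
      (fst (fst z) mod P) \<otimes>\<^bsub>integer_mod_group p\<^esub> (fst (fst z') mod P)"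
    unfolding zk zl mult_integer_mod_group fst_conv .
qed

lemma auto_M_relations:
  assumes \<theta>: "\<theta> \<in> hom M M" and c: "\<theta> cM = (0, kc)" and d: "\<theta> dM = (v, k1)" and b: "\<theta> bM = (w, k2)"
  shows "k2 = 0" "rmult (rpow u kc) v \<doteq> v + rmult (rpow u k1) w" "rmult (rpow u k1) w \<doteq> w"
    and "k1 = 0 \<Longrightarrow> rmult (rpow u kc) w \<doteq> rmult (P, 0) v + w"
proof -
  interpret group M by (rule group_M)
  have "\<theta> cM \<in> carrier M" "\<theta> dM \<in> carrier M" "\<theta> bM \<in> carrier M"
    using \<theta> generators_in_M by (auto intro: hom_in_carrier)
  then have vw: "rnorm v = v" "rnorm w = w" "k2 < p"
    by (simp_all add: c d b M_carrier)
  have "\<theta> (cM \<otimes>\<^bsub>M\<^esub> dM) = \<theta> (dM \<otimes>\<^bsub>M\<^esub> bM \<otimes>\<^bsub>M\<^esub> cM)"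
    by (simp add: M_rel_cd)
  then have E1: "rnorm (rmult (rpow u kc) v) = rnorm (v + rmult (rpow u k1) w)"
    and E1': "(kc + k1) mod p = ((k1 + k2) mod p + kc) mod p"
    using \<theta> generators_in_M by (simp_all add: hom_mult c d b)
  have "((k1 + k2) mod p + kc) mod p = (k1 + k2 + kc) mod p" by (rule mod_add_left_eq)
  then have "(kc + k1) mod p = (kc + k1 + k2) mod p" using E1' by (simp add: ac_simps)
  then have "[kc + k1 + 0 = kc + k1 + k2] (mod p)" by (simp add: cong_def)
  then have "[0 = k2] (mod p)" by (simp only: cong_add_lcancel_nat)
  then show "k2 = 0" using \<open>k2 < p\<close> by (simp add: cong_def)
  then show "rmult (rpow u kc) v \<doteq> v + rmult (rpow u k1) w"
    using E1 by (simp add: rcong_def)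
  have "\<theta> (bM \<otimes>\<^bsub>M\<^esub> dM) = \<theta> (dM \<otimes>\<^bsub>M\<^esub> bM)"
    by (simp add: M_rel_bd)
  then have "rnorm (w + v) = rnorm (v + rmult (rpow u k1) w)"
    using \<theta> generators_in_M \<open>k2 = 0\<close> by (simp add: hom_mult d b)
  then have "v + rmult (rpow u k1) w \<doteq> v + w"
    by (simp add: rcong_def add.commute)
  then show "rmult (rpow u k1) w \<doteq> w"
    by (rule add_rcong_cancel)
  assume "k1 = 0"
  have "\<theta> (cM \<otimes>\<^bsub>M\<^esub> bM) = \<theta> (dM [^]\<^bsub>M\<^esub> p \<otimes>\<^bsub>M\<^esub> bM \<otimes>\<^bsub>M\<^esub> cM)"
    by (simp add: M_rel_cb_dM)
  then have "rnorm (rmult (rpow u kc) w) = rnorm (rnorm (P * fst v, P * snd v) + w)"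
    using \<theta> generators_in_M \<open>k2 = 0\<close> \<open>k1 = 0\<close> vw
    by (simp add: hom_mult hom_nat_pow c d b M_pow_level_0)
  also have "\<dots> = rnorm (rmult (P, 0) v + w)"
    by (intro rnorm_eqI add_rcong rcong_refl) (simp add: rmult_def rnorm_rcong)
  finally show "rmult (rpow u kc) w \<doteq> rmult (P, 0) v + w"
    by (simp add: rcong_def)
qed

lemma AutK_M_cM:
  assumes \<theta>: "\<theta> \<in> carrier (AutK M (generate M {cM}))"
  obtains kc where "\<theta> cM = (0, kc)" "0 < kc" "kc < p"
proof -
  have auto: "\<theta> \<in> auto M" and K: "\<theta> ` generate M {cM} = generate M {cM}"
    using \<theta> by (simp_all add: AutK_carrier)
  have "\<theta> cM \<in> generate M {cM}"
    using K by (blast intro: generate.incl)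
  then obtain kc where kc: "\<theta> cM = (0, kc)" "kc < p"
    by (auto simp: generate_M_cM)
  have "kc \<noteq> 0"
  proof
    assume "kc = 0"
    moreover have "\<theta> \<one>\<^bsub>M\<^esub> = \<one>\<^bsub>M\<^esub>"
      using auto group_M by (simp add: auto_def hom_one)
    ultimately have "\<theta> cM = \<theta> \<one>\<^bsub>M\<^esub>" using kc by (simp add: M_one)
    then have "cM = \<one>\<^bsub>M\<^esub>"
      using auto generators_in_M group.is_monoid[OF group_M]
      by (auto simp: auto_def Bij_def bij_betw_def dest: inj_onD)
    then show False by (simp add: cM_def M_one)
  qed
  with kc that show thesis by simp
qed

(* Reducing the R-coordinate modulo \<epsilon> is a homomorphism M \<rightarrow> Z_p that kills b and c.  If it
   also killed \<theta> d, it would kill the whole image of \<theta>, which is M. *)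
lemma auto_M_dM_unit:
  assumes \<theta>: "\<theta> \<in> auto M" and c: "\<theta> cM = (0, kc)" and d: "\<theta> dM = (v, k1)" and b: "\<theta> bM = (w, k2)"
    and w: "w \<doteq> rmult (rpow u kc - (1, 0)) v"
  shows "runit v"
proof (rule ccontr)
  assume "\<not> runit v"
  then have Pv: "P dvd fst v" by (simp add: runit_def)
  obtain q q' where "fst w = fst (rmult (rpow u kc - (1, 0)) v) + P^2 * q"
    using w by (rule rcongE)
  then have Pw: "P dvd fst w"
    using Pv by (simp add: rmult_def power2_eq_square)
  let ?\<pi> = "\<lambda>z. fst (fst z) mod P"
  have "\<theta> \<in> hom M M" using \<theta> by (simp add: auto_def)
  then have "?\<pi> \<circ> \<theta> \<in> hom M (integer_mod_group p)"
    using fst_mod_hom by (rule hom_compose)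
  moreover have "(\<lambda>_. 0) \<in> hom M (integer_mod_group p)"
    using p_pos by (intro homI) (simp_all add: carrier_integer_mod_group)
  ultimately have hom: "?\<pi> \<circ> \<theta> \<in> hom M (integer_mod_group p)" "(\<lambda>_. 0) \<in> hom M (integer_mod_group p)" .
  have "(?\<pi> \<circ> \<theta>) y = (\<lambda>_. 0) y" if "y \<in> {dM, bM, cM}" for y
    using that Pv Pw c d b by (auto simp: dvd_eq_mod_eq_0)
  then have vanish: "(?\<pi> \<circ> \<theta>) x = (\<lambda>_. 0) x" if "x \<in> carrier M" for x
    using hom_eq_on_generate[OF group_M group_integer_mod_group hom, of "{dM, bM, cM}"]
      that generators_in_M generate_M_dbc by simp
  have "\<theta> ` carrier M = carrier M"
    using \<theta> by (simp add: auto_def Bij_def bij_betw_def)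
  then obtain z where "z \<in> carrier M" "\<theta> z = dM"
    using generators_in_M(4) by (metis imageE)
  then have "fst (fst dM) mod P = 0" using vanish[of z] by simp
  then show False
    using P_lt_P_square by (simp add: dM_def)
qed

lemma AutK_M_generators:
  assumes \<theta>: "\<theta> \<in> carrier (AutK M (generate M {cM}))"
  obtains s v w where "runit v" "\<theta> dM = (v, 0)" "\<theta> bM = (w, 0)" "\<theta> cM = (0, conj_exp s 1)"
    and "w \<doteq> rmult v (rconj s (P * half, 1))"
proof -
  have auto: "\<theta> \<in> auto M" using \<theta> by (simp add: AutK_carrier)
  then have hom: "\<theta> \<in> hom M M" by (simp add: auto_def)
  obtain kc where c: "\<theta> cM = (0, kc)" "0 < kc" "kc < p"
    using AutK_M_cM[OF \<theta>] by blast
  obtain v k1 where d: "\<theta> dM = (v, k1)" by (cases "\<theta> dM")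
  obtain w k2 where b: "\<theta> bM = (w, k2)" by (cases "\<theta> bM")
  note rel = auto_M_relations[OF hom c(1) d b]
  have "\<theta> dM \<in> carrier M" using hom generators_in_M by (simp add: hom_in_carrier)
  then have "k1 < p" by (simp add: d M_carrier)
  have vw: "rmult (rpow u kc) v \<doteq> v + w"
    using rel(2) add_rcong[OF rcong_refl rel(3)] by (rule rcong_trans)
  have "rmult (rpow u kc - (1, 0)) v = rmult (rpow u kc) v + - v"
    by (simp add: rmult_diff)
  also have "\<dots> \<doteq> (v + w) + - v"
    by (rule add_rcong[OF vw rcong_refl])
  also have "\<dots> = w" by simp
  finally have w: "w \<doteq> rmult (rpow u kc - (1, 0)) v" by (rule rcong_sym)
  have unit: "runit v" by (rule auto_M_dM_unit[OF auto c(1) d b w])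
  then have nPv: "\<not> P dvd fst v" by (simp add: runit_def)
  have "\<not> P dvd int kc" using c(2,3) P_dvd_small by force
  moreover have "P dvd int k1 * int kc * fst v" by (rule rpow_u_annihilator[OF w rel(3)])
  ultimately have "P dvd int k1" using nPv prime_P by (simp add: prime_dvd_mult_iff)
  then have k1: "k1 = 0" using \<open>k1 < p\<close> P_dvd_small by force
  have "P dvd (int kc * int kc - 1) * fst v"
    by (rule rpow_u_square_relation[OF w rel(4)[OF k1]])
  then have "[int kc * int kc = 1] (mod P)"
    using nPv prime_P by (simp add: prime_dvd_mult_iff cong_iff_dvd_diff)
  then have "[kc * kc = 1] (mod p)" by (metis cong_int_iff of_nat_1 of_nat_mult)
  then have "kc = 1 \<or> kc = p - 1" using prime_square_eq_one prime_p c(2,3) by blast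
  moreover have "conj_exp False 1 = 1" "conj_exp True 1 = p - 1"
    using p_pos by (simp_all add: conj_exp_def)
  ultimately obtain s where s: "kc = conj_exp s 1" by metis
  have "rmult (rpow u kc - (1, 0)) v \<doteq> rmult (rconj s (P * half, 1)) v"
    unfolding s by (rule rmult_rcong[OF rpow_u_conj_exp_one rcong_refl])
  with w have "w \<doteq> rmult (rconj s (P * half, 1)) v" by (rule rcong_trans)
  then show thesis
    using that unit d b c(1) k1 rel(1) s by (simp add: rmult_comm)
qed

lemma AutK_M_twist:
  assumes \<theta>: "\<theta> \<in> carrier (AutK M (generate M {cM}))"
  obtains s v where "runit v" "\<theta> = twist s v"
proof -
  obtain s v w where unit: "runit v" and gens: "\<theta> dM = (v, 0)" "\<theta> bM = (w, 0)" "\<theta> cM = (0, conj_exp s 1)"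
    and w: "w \<doteq> rmult v (rconj s (P * half, 1))"
    using AutK_M_generators[OF \<theta>] by blast
  have hom: "\<theta> \<in> hom M M" "\<theta> \<in> extensional (carrier M)"
    using \<theta> by (auto simp: AutK_carrier auto_def Bij_def)
  have "\<theta> dM \<in> carrier M" "\<theta> bM \<in> carrier M"
    using hom(1) generators_in_M by (simp_all add: hom_in_carrier)
  then have v: "rnorm v = v" and "rnorm w = w"
    using gens by (simp_all add: M_carrier)
  then have "\<theta> bM = twist s v bM"
    using gens(2) w by (simp add: twist_generators rcong_def)
  moreover have "\<theta> dM = twist s v dM" "\<theta> cM = twist s v cM"
    using gens v by (simp_all add: twist_generators)
  ultimately have agree: "\<theta> x = twist s v x" if "x \<in> {dM, bM, cM}" for x
    using that by blast
  have "\<theta> x = twist s v x" if "x \<in> carrier M" for x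
    using hom_eq_on_generate[where S = "{dM, bM, cM}", OF group_M group_M hom(1) twist_hom _ agree]
      that generators_in_M generate_M_dbc
    by simp
  then have "\<theta> = twist s v"
    using hom(2) by (intro extensionalityI[of _ "carrier M"]) (auto simp: twist_def)
  with unit that show thesis by blast
qed

end

section \<open>The unit group of R\<close>

lemma group_dihedral_group: "0 < n \<Longrightarrow> group (dihedral_group n)"
proof (rule groupI)
  fix x assume n: "0 < n" and x: "x \<in> carrier (dihedral_group n)"
  obtain k s where xk: "x = (k, s)" by (cases x)
  define y where "y = (if s then k else (- k) mod int n, s)"
  have "y \<in> carrier (dihedral_group n)" using n x by (auto simp: y_def xk dihedral_group_def)
  moreover have "y \<otimes>\<^bsub>dihedral_group n\<^esub> x = \<one>\<^bsub>dihedral_group n\<^esub>"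
    using x by (auto simp: y_def xk dihedral_group_def mod_simps)
  ultimately show "\<exists>y \<in> carrier (dihedral_group n). y \<otimes>\<^bsub>dihedral_group n\<^esub> x = \<one>\<^bsub>dihedral_group n\<^esub>"
    by blast
qed (auto simp: dihedral_group_def mod_simps algebra_simps)

context G7_model
begin

definition prim_root :: nat where
  "prim_root = (SOME g. residue_primroot (p^2) g)"

abbreviation N :: nat where "N \<equiv> p * (p - 1)"

lemma totient_p_square: "totient (p^2) = N"
  using totient_prime_power[of p 2] prime_p by simp

lemma residue_primroot_prim_root: "residue_primroot (p^2) prim_root"
proof -
  obtain g where "\<forall>k>0. residue_primroot (p ^ k) g"
    using residue_primroot_odd_prime_power_exists[of p] prime_p odd_p by blast
  then have "residue_primroot (p^2) g" by simp
  then show ?thesis unfolding prim_root_def by (rule someI)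
qed

lemma coprime_prim_root: "coprime (p^2) prim_root"
  using residue_primroot_prim_root by (simp add: residue_primroot_def)

lemma not_P_dvd_prim_root_pow: "\<not> P dvd int prim_root ^ n"
proof
  assume "P dvd int prim_root ^ n"
  then have "p dvd prim_root"
    using prime_P prime_dvd_power by (metis int_dvd_int_iff of_nat_power)
  moreover have "coprime p prim_root" using coprime_prim_root by simp
  ultimately have "is_unit p" using coprime_common_divisor[of p prim_root p] by simp
  then show False using prime_p by (simp add: not_prime_unit)
qed

lemma prim_root_pow_mod: "int prim_root ^ n mod P^2 = int prim_root ^ (n mod N) mod P^2"
proof -
  have "[prim_root ^ N = 1] (mod p^2)"
    using euler_theorem[of prim_root "p^2"] coprime_prim_root totient_p_square
    by (simp add: coprime_commute)
  then have "[int prim_root ^ N = 1] (mod P^2)"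
    by (metis cong_int_iff of_nat_1 of_nat_power)
  then have "[(int prim_root ^ N) ^ (n div N) * int prim_root ^ (n mod N) = 1 ^ (n div N) * int prim_root ^ (n mod N)] (mod P^2)"
    by (intro cong_mult cong_pow cong_refl)
  then show ?thesis
    by (simp add: cong_def flip: power_mult power_add)
qed

lemma prim_root_pow_inj:
  assumes "c < N" "c' < N" "[int prim_root ^ c = int prim_root ^ c'] (mod P^2)"
  shows "c = c'"
proof -
  have "prim_root ^ c mod p^2 = prim_root ^ c' mod p^2"
    using assms(3) by (metis cong_def cong_int_iff of_nat_power)
  moreover have "inj_on (\<lambda>k. prim_root ^ k mod p^2) {..<ord (p^2) prim_root}"
    using inj_power_mod[of "p^2" prim_root] coprime_prim_root by simp
  moreover have "ord (p^2) prim_root = N"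
    using residue_primroot_prim_root totient_p_square by (simp add: residue_primroot_def)
  ultimately show ?thesis using assms(1,2) by (auto dest: inj_onD)
qed

lemma prim_root_pow_surj:
  assumes "\<not> P dvd \<gamma>"
  obtains c where "c < N" "[int prim_root ^ c = \<gamma>] (mod P^2)"
proof -
  define r where "r = nat (\<gamma> mod P^2)"
  have r: "int r = \<gamma> mod P^2" "int r < P^2"
    unfolding r_def using P_lt_P_square by simp_all
  have "\<not> P dvd int r"
    using assms dvd_mod_iff[of P "P^2" \<gamma>] r(1) by simp
  then have "coprime (int r) P"
    using prime_P prime_imp_coprime coprime_commute by blast
  then have "coprime r (p^2)"
    by (metis coprime_int_iff coprime_power_right_iff of_nat_power)
  moreover have "0 < r" by (rule ccontr) (use \<open>\<not> P dvd int r\<close> in simp)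
  moreover have "r < p^2" using r(2) by (metis of_nat_less_iff of_nat_power)
  ultimately have "r \<in> totatives (p^2)" by (simp add: totatives_def coprime_commute)
  moreover have "1 < p" using p_ge_5 by simp
  then have "1 < p^2" by (rule one_less_power) simp
  then have "bij_betw (\<lambda>i. prim_root ^ i mod p^2) {..<totient (p^2)} (totatives (p^2))"
    using residue_primroot_prim_root by (rule residue_primroot_is_generator)
  ultimately have "r \<in> (\<lambda>i. prim_root ^ i mod p^2) ` {..<N}"
    by (simp add: bij_betw_def totient_p_square)
  then obtain c where c: "c < N" "prim_root ^ c mod p^2 = r"
    by blast
  then have "int prim_root ^ c mod P^2 = \<gamma> mod P^2"
    using r(1) by (metis of_nat_mod of_nat_power)
  with c(1) that show thesis by (simp add: cong_def)
qed

definition unit_param :: "nat \<Rightarrow> nat \<Rightarrow> int \<times> int" where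
  "unit_param a c = rmult (rpow u a) (int prim_root ^ c, 0)"

lemma unit_param_rcong:
  "unit_param a c \<doteq> ((1 + P * (int a * half + int (a choose 2))) * int prim_root ^ c, int a * int prim_root ^ c)"
  using rmult_rcong[OF rpow_u rcong_refl, of a "(int prim_root ^ c, 0)"] by (simp add: unit_param_def rmult_def)

lemma runit_unit_param: "runit (unit_param a c)"
proof -
  obtain q q' where "fst (unit_param a c) =
      fst ((1 + P * (int a * half + int (a choose 2))) * int prim_root ^ c, int a * int prim_root ^ c) + P^2 * q"
    and "snd (unit_param a c) =
      snd ((1 + P * (int a * half + int (a choose 2))) * int prim_root ^ c, int a * int prim_root ^ c) + P * q'"
    using unit_param_rcong by (rule rcongE)
  then have "fst (unit_param a c) = int prim_root ^ c + P * ((int a * half + int (a choose 2)) * int prim_root ^ c + P * q)"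
    by (simp add: algebra_simps power2_eq_square)
  then show ?thesis
    using not_P_dvd_prim_root_pow[of c] by (simp add: runit_def dvd_add_left_iff)
qed

lemma unit_param_mult:
  "unit_param ((a + conj_exp s b) mod p) ((c + c') mod N) \<doteq> rmult (unit_param a c) (rconj s (unit_param b c'))"
proof -
  have "unit_param ((a + conj_exp s b) mod p) ((c + c') mod N) \<doteq>
      rmult (rpow u (a + conj_exp s b)) (int prim_root ^ (c + c'), 0)"
    unfolding unit_param_def
    by (intro rmult_rcong rcong_sym[OF rpow_u_mod]) (simp add: rcong_def rnorm_def prim_root_pow_mod[of "c + c'"])
  also have "\<dots> = rmult (rmult (rpow u a) (rpow u (conj_exp s b))) (rmult (int prim_root ^ c, 0) (int prim_root ^ c', 0))"
    by (simp add: rpow_add rmult_def power_add)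
  also have "\<dots> \<doteq> rmult (rmult (rpow u a) (rconj s (rpow u b))) (rmult (int prim_root ^ c, 0) (int prim_root ^ c', 0))"
    by (intro rmult_rcong rcong_refl rcong_sym[OF rconj_rpow_u])
  also have "\<dots> = rmult (unit_param a c) (rconj s (unit_param b c'))"
    by (simp add: unit_param_def rconj_rmult rmult_assoc rmult_left_commute)
  finally show ?thesis .
qed

lemma unit_param_inj:
  assumes "a < p" "a' < p" "c < N" "c' < N" and eq: "unit_param a c \<doteq> unit_param a' c'"
  shows "a = a' \<and> c = c'"
proof -
  define A where "A = int a * half + int (a choose 2)"
  define A' where "A' = int a' * half + int (a' choose 2)"
  let ?g = "int prim_root ^ c" and ?g' = "int prim_root ^ c'"
  have "((1 + P * A) * ?g, int a * ?g) \<doteq> ((1 + P * A') * ?g', int a' * ?g')"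
    using rcong_trans[OF rcong_trans[OF rcong_sym[OF unit_param_rcong] eq] unit_param_rcong]
    by (simp add: A_def A'_def)
  then have fst_cong: "[(1 + P * A) * ?g = (1 + P * A') * ?g'] (mod P^2)"
    and snd_cong: "[int a * ?g = int a' * ?g'] (mod P)"
    by (simp_all add: rcong_iff)
  have "coprime P ?g"
    using prime_imp_coprime[OF prime_P not_P_dvd_prim_root_pow] .
  then have unit_g: "coprime ?g P" by (simp add: coprime_commute)
  have "\<not> P dvd 1 + P * A"
    using P_lt_P_square by (simp add: dvd_add_left_iff zdvd_not_zless)
  then have "coprime P (1 + P * A)"
    using prime_imp_coprime[OF prime_P] by blast
  then have unit_A: "coprime (1 + P * A) (P^2)" by (simp add: coprime_commute)
  have "[(1 + P * A) * ?g = ?g] (mod P)" "[(1 + P * A') * ?g' = ?g'] (mod P)"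
    by (simp_all add: cong_iff_dvd_diff algebra_simps)
  then have "[?g = ?g'] (mod P)"
    using cong_square_imp_cong[OF fst_cong] by (meson cong_sym cong_trans)
  then have "[int a * ?g = int a' * ?g] (mod P)"
    using snd_cong by (meson cong_scalar_left cong_sym cong_trans)
  then have "[int a = int a'] (mod P)"
    using unit_g by (simp add: cong_mult_rcancel)
  then have a: "a = a'"
    using assms(1,2) by (simp add: cong_int_iff cong_less_modulus_unique_nat)
  then have "[(1 + P * A) * ?g = (1 + P * A) * ?g'] (mod P^2)"
    using fst_cong by (simp add: A_def A'_def)
  then have "[?g = ?g'] (mod P^2)"
    using unit_A by (simp add: cong_mult_lcancel)
  then show ?thesis
    using a prim_root_pow_inj assms(3,4) by blast
qed

lemma unit_param_surj:
  assumes "runit v"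
  obtains a c where "a < p" "c < N" "unit_param a c \<doteq> v"
proof -
  obtain \<alpha> \<beta> where v: "v = (\<alpha>, \<beta>)" by (cases v)
  have "\<not> P dvd \<alpha>" using assms by (simp add: runit_def v)
  then have "coprime \<alpha> P"
    using prime_imp_coprime[OF prime_P] by (simp add: coprime_commute)
  then obtain \<alpha>' where \<alpha>': "[\<alpha> * \<alpha>' = 1] (mod P)" using cong_solve_coprime_int by blast
  define a where "a = nat ((\<beta> * \<alpha>') mod P)"
  have a: "[int a = \<beta> * \<alpha>'] (mod P)" "a < p"
    using P_lt_P_square by (simp_all add: a_def nat_less_iff cong_def)
  define A where "A = int a * half + int (a choose 2)"
  define \<gamma> where "\<gamma> = \<alpha> * (1 - P * A)"
  have \<gamma>\<alpha>: "[\<gamma> = \<alpha>] (mod P)"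
    by (rule cong_of_eq_mult[where q = "- \<alpha> * A"]) (simp add: \<gamma>_def algebra_simps)
  then have "\<not> P dvd \<gamma>"
    using \<open>\<not> P dvd \<alpha>\<close> cong_dvd_iff by blast
  then obtain c where c: "c < N" "[int prim_root ^ c = \<gamma>] (mod P^2)"
    by (rule prim_root_pow_surj)
  have "[(1 + P * A) * int prim_root ^ c = (1 + P * A) * \<gamma>] (mod P^2)"
    using c(2) by (rule cong_scalar_left)
  moreover have "[(1 + P * A) * \<gamma> = \<alpha>] (mod P^2)"
    by (rule cong_of_eq_mult[where q = "- A * A * \<alpha>"]) (simp add: \<gamma>_def algebra_simps power2_eq_square)
  ultimately have fst_cong: "[(1 + P * A) * int prim_root ^ c = \<alpha>] (mod P^2)"
    by (rule cong_trans)
  have "[int prim_root ^ c = \<alpha>] (mod P)"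
    using cong_square_imp_cong[OF c(2)] \<gamma>\<alpha> by (rule cong_trans)
  with a(1) have "[int a * int prim_root ^ c = \<beta> * \<alpha>' * \<alpha>] (mod P)"
    by (rule cong_mult)
  moreover have "[\<beta> * \<alpha>' * \<alpha> = \<beta>] (mod P)"
    using cong_scalar_left[OF \<alpha>', of \<beta>] by (simp add: ac_simps)
  ultimately have "[int a * int prim_root ^ c = \<beta>] (mod P)"
    by (rule cong_trans)
  with fst_cong have "((1 + P * A) * int prim_root ^ c, int a * int prim_root ^ c) \<doteq> v"
    by (simp add: rcong_iff v)
  then have "unit_param a c \<doteq> v"
    using unit_param_rcong[of a c] by (simp add: A_def rcong_trans)
  with a(2) c(1) that show thesis by blast
qed

abbreviation DZ :: "((int \<times> bool) \<times> int) monoid" where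
  "DZ \<equiv> dihedral_group p \<times>\<times> integer_mod_group N"

lemma carrier_DZ: "carrier DZ = ({0..<P} \<times> UNIV) \<times> {0..<int N}"
  using p_ge_5 by (simp add: dihedral_group_def carrier_integer_mod_group)

(* ((j, s), c) \<mapsto> twist s (u^j g^c); \<sigma> inverts u and fixes g. *)
definition aut_param :: "(int \<times> bool) \<times> int \<Rightarrow> (int \<times> int) \<times> nat \<Rightarrow> (int \<times> int) \<times> nat" where
  "aut_param x = twist (snd (fst x)) (unit_param (nat (fst (fst x))) (nat (snd x)))"

lemma aut_param_AutK: "aut_param x \<in> carrier (AutK M (generate M {cM}))"
  by (simp add: aut_param_def twist_in_AutK runit_unit_param)

lemma compose_twist:
  "compose (carrier M) (twist s r) (twist s' r') = twist (s \<noteq> s') (rmult r (rconj s r'))"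
proof (rule extensionalityI[of _ "carrier M"])
  show "twist (s \<noteq> s') (rmult r (rconj s r')) \<in> extensional (carrier M)"
    by (simp add: twist_def)
qed (simp_all add: compose_def twist_compose)

lemma nat_dihedral_mult:
  assumes "0 \<le> j" "j < P" "0 \<le> j'" "j' < P"
  shows "nat ((j + (if s then - j' else j')) mod P) = (nat j + conj_exp s (nat j')) mod p"
proof -
  have "int ((nat j + conj_exp s (nat j')) mod p) = (j + (if s then - j' else j')) mod P"
  proof (cases s)
    case True
    have "int ((nat j + conj_exp s (nat j')) mod p) = (j + (j' * (P - 1)) mod P) mod P"
      using True assms p_pos by (simp add: conj_exp_def of_nat_mod of_nat_diff)
    also have "\<dots> = ((j - j') + P * j') mod P" by (simp add: mod_add_right_eq algebra_simps)
    finally show ?thesis using True by simp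
  qed (use assms in \<open>simp add: conj_exp_def of_nat_mod\<close>)
  then show ?thesis by (metis nat_int)
qed

lemma aut_param_hom: "aut_param \<in> hom DZ (AutK M (generate M {cM}))"
proof (rule homI)
  fix x y assume x: "x \<in> carrier DZ" and y: "y \<in> carrier DZ"
  obtain j s c where xx: "x = ((j, s), c)" by (metis prod.collapse)
  obtain j' s' c' where yy: "y = ((j', s'), c')" by (metis prod.collapse)
  have b: "0 \<le> j" "j < P" "0 \<le> c" "c < int N" "0 \<le> j'" "j' < P" "0 \<le> c'" "c' < int N"
    using x y unfolding carrier_DZ xx yy by auto
  have "(c + c') mod int N = int ((nat c + nat c') mod N)"
    using b by (simp add: of_nat_mod)
  then have "nat ((c + c') mod int N) = (nat c + nat c') mod N" by simp
  then have "aut_param (x \<otimes>\<^bsub>DZ\<^esub> y) =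
      twist (s \<noteq> s') (unit_param ((nat j + conj_exp s (nat j')) mod p) ((nat c + nat c') mod N))"
    by (simp add: xx yy dihedral_group_def aut_param_def nat_dihedral_mult[OF b(1,2,5,6)])
  also have "\<dots> = twist (s \<noteq> s') (rmult (unit_param (nat j) (nat c)) (rconj s (unit_param (nat j') (nat c'))))"
    by (rule twist_rcong[OF unit_param_mult])
  also have "\<dots> = aut_param x \<otimes>\<^bsub>AutK M (generate M {cM})\<^esub> aut_param y"
    using aut_param_AutK[of x] aut_param_AutK[of y]
    by (simp add: AutK_mult AutK_carrier aut_param_def xx yy compose_twist)
  finally show "aut_param (x \<otimes>\<^bsub>DZ\<^esub> y) = aut_param x \<otimes>\<^bsub>AutK M (generate M {cM})\<^esub> aut_param y" .
qed (rule aut_param_AutK)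

lemma aut_param_inj: "inj_on aut_param (carrier DZ)"
proof (rule inj_onI)
  fix x y assume x: "x \<in> carrier DZ" and y: "y \<in> carrier DZ" and e: "aut_param x = aut_param y"
  obtain j s c where xx: "x = ((j, s), c)" by (metis prod.collapse)
  obtain j' s' c' where yy: "y = ((j', s'), c')" by (metis prod.collapse)
  have b: "0 \<le> j" "j < P" "0 \<le> c" "c < int N" "0 \<le> j'" "j' < P" "0 \<le> c'" "c' < int N"
    using x y unfolding carrier_DZ xx yy by auto
  have "conj_exp s 1 = conj_exp s' 1"
    using arg_cong[OF e, of "\<lambda>f. f cM"] by (simp add: aut_param_def xx yy twist_generators)
  moreover have "conj_exp True 1 \<noteq> conj_exp False 1"
    using p_ge_5 by (simp add: conj_exp_def)
  ultimately have "s = s'" by metis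
  have "unit_param (nat j) (nat c) \<doteq> unit_param (nat j') (nat c')"
    using arg_cong[OF e, of "\<lambda>f. f dM"] by (simp add: aut_param_def xx yy twist_generators rcong_def)
  then have "nat j = nat j' \<and> nat c = nat c'"
    using b by (intro unit_param_inj) (simp_all add: nat_less_iff)
  then show "x = y" using b \<open>s = s'\<close> by (simp add: xx yy eq_nat_nat_iff)
qed

lemma aut_param_surj: "carrier (AutK M (generate M {cM})) \<subseteq> aut_param ` carrier DZ"
proof
  fix \<theta> assume "\<theta> \<in> carrier (AutK M (generate M {cM}))"
  then obtain s v where v: "runit v" "\<theta> = twist s v"
    by (rule AutK_M_twist)
  obtain a c where ac: "a < p" "c < N" "unit_param a c \<doteq> v"
    using unit_param_surj[OF v(1)] by blast
  then have "\<theta> = aut_param ((int a, s), int c)"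
    using v by (simp add: aut_param_def twist_rcong)
  moreover have "((int a, s), int c) \<in> carrier DZ"
    unfolding carrier_DZ using ac(1) of_nat_less_iff[where 'a = int, THEN iffD2, OF ac(2)] p_pos
    by (simp add: of_nat_diff)
  ultimately show "\<theta> \<in> aut_param ` carrier DZ" by blast
qed

lemma AutK_M_iso: "AutK M (generate M {cM}) \<cong> DZ"
proof -
  have "aut_param \<in> iso DZ (AutK M (generate M {cM}))"
    using aut_param_hom aut_param_inj aut_param_surj aut_param_AutK
    by (auto simp: iso_def bij_betw_def)
  moreover have "group DZ"
    using p_pos by (intro DirProd_group group_dihedral_group group_integer_mod_group)
  ultimately show ?thesis by (metis group.iso_sym is_isoI)
qed

end

theorem mainTheorem8:
  fixes G :: "'a monoid" and p :: nat and a b c :: 'a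
  assumes "Factorial_Ring.prime p" and "p \<ge> 5"
    and "is_G7_presentation G p a b c"
  shows "AutK G (generate G {c}) \<cong> dihedral_group p \<times>\<times> integer_mod_group (p * (p - 1))"
proof -
  interpret G7_model p using assms(1,2) by unfold_locales
  have G: "group G" and c: "c \<in> carrier G"
    using assms(3) by (auto simp: is_G7_presentation_def G7_relations_def)
  obtain \<phi> where \<phi>: "\<phi> \<in> iso G M" "\<phi> c = cM"
    using G7_presentation_iso[OF assms(3) p_pos group_M G7_relations_M generate_M_abc card_carrier_M]
    by blast
  interpret \<phi>: group_hom G M \<phi>
    using G group_M \<phi>(1) by (simp add: group_hom_def group_hom_axioms_def iso_def)
  have "\<phi> ` generate G {c} = generate M {cM}"
    using c \<phi>(2) by (simp add: \<phi>.generate_img[symmetric])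
  moreover have "generate G {c} \<subseteq> carrier G"
    using c by (intro group.generate_incl[OF G]) auto
  ultimately have "AutK G (generate G {c}) \<cong> AutK M (generate M {cM})"
    using AutK_iso_transport[OF G group_M \<phi>(1)] by metis
  also have "\<dots> \<cong> DZ" by (rule AutK_M_iso)
  finally show ?thesis .
qed

end
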